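(* Let $W$ be a Coxeter group with simple generators $s_1,\dots,s_n$ and let $c$ be a Coxeter element. Suppose $x_1\cdots x_N$ is $c$-admissible and $s_{x_1}\cdots s_{x_N}$ is a reduced word. For $1\le i\le N$ let $t_i=s_{x_1}\cdots s_{x_{i-1}}s_{x_i}s_{x_{i-1}}\cdots s_{x_1}$. Then for all $i<j$ we have $\omega_c(\alpha_{t_i},\alpha_{t_j})\le 0$, and if $\omega_c(\alpha_{t_i},\alpha_{t_j})=0$ then $t_i$ and $t_j$ commute.
   Context: $W$ is a Coxeter group of finite rank $n$: generated by $s_1,\dots,s_n$ with $s_i^2=1$, $(s_is_j)^{m_{ij}}=1$ for $i\ne j$, $2\le m_{ij}=m_{ji}\le\infty$. Let $V$ be the real vector space with basis $\alpha_1,\dots,\alpha_n$ and symmetric bilinear form $B$ with $B(\alpha_i,\alpha_i)=2$, $B(\alpha_i,\alpha_j)=-2\cos(\pi/m_{ij})$ for $i\ne j$; $W$ acts by $s_i v=v-B(v,\alpha_i)\alpha_i$. Roots are the vectors $w\alpha_i$; each is positive (nonnegative combination of the $\alpha_i$) or negative. Reflections (conjugates of simple generators) are in bijection with positive roots via $w\alpha_i\leftrightarrow ws_iw^{-1}$; $\alpha_t$ denotes the positive root of the reflection $t$. A Coxeter element is $c=s_{y_1}\cdots s_{y_n}$ with $y$ a permutation of $\{1,\dots,n\}$; the skew-symmetric bilinear form $\omega_c$ on $V$ is defined by $\omega_c(\alpha_{y_i},\alpha_{y_j})=B(\alpha_{y_i},\alpha_{y_j})$ for $i<j$, $\omega_c(\alpha_{y_i},\alpha_{y_j})=-B(\alpha_{y_i},\alpha_{y_j})$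 for $i>j$, $\omega_c(\alpha_k,\alpha_k)=0$ (independent of the chosen expression of $c$). A vertex $x$ is initial in $c$ if $c$ has such an expression with $y_1=x$; then $s_xcs_x$ is a Coxeter element. A sequence $x_1,\dots,x_N$ is $c$-admissible if, with $c_0=c$, $c_k=s_{x_k}c_{k-1}s_{x_k}$, each $x_k$ is initial in $c_{k-1}$. *)

theory Defs
  imports Complex_Main "HOL-Library.Extended_Nat"
begin

text \<open>Elements of W are represented by
  words (lists of generator indices); equality in W is the congruence generated by
  the defining relators of the presentation.\<close>

definition coxeter_matrix :: "nat \<Rightarrow> (nat \<Rightarrow> nat \<Rightarrow> enat) \<Rightarrow> bool" where
  "coxeter_matrix n m \<longleftrightarrow>
     (\<forall>i<n. \<forall>j<n. i \<noteq> j \<longrightarrow> m i j = m j i \<and> 2 \<le> m i j)"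

inductive relator :: "nat \<Rightarrow> (nat \<Rightarrow> nat \<Rightarrow> enat) \<Rightarrow> nat list \<Rightarrow> bool"
  for n m where
  sq: "i < n \<Longrightarrow> relator n m [i, i]"
| braid: "i < n \<Longrightarrow> j < n \<Longrightarrow> i \<noteq> j \<Longrightarrow> m i j = enat k \<Longrightarrow>
          relator n m (concat (replicate k [i, j]))"

text \<open>Equality in W of two words: the congruence on the free monoid generated by
  the relators (the monoid quotient is the group W since all s_i are involutions).\<close>
inductive coxeq :: "nat \<Rightarrow> (nat \<Rightarrow> nat \<Rightarrow> enat) \<Rightarrow> nat list \<Rightarrow> nat list \<Rightarrow> bool"
  for n m where
  refl: "coxeq n m u u"
| sym: "coxeq n m u v \<Longrightarrow> coxeq n m v u"
| trans: "coxeq n m u v \<Longrightarrow> coxeq n m v w \<Longrightarrow> coxeq n m u w"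
| rel: "relator n m r \<Longrightarrow> coxeq n m (u @ r @ v) (u @ v)"

definition reduced_word :: "nat \<Rightarrow> (nat \<Rightarrow> nat \<Rightarrow> enat) \<Rightarrow> nat list \<Rightarrow> bool" where
  "reduced_word n m w \<longleftrightarrow> (\<forall>v. coxeq n m v w \<longrightarrow> length w \<le> length v)"

text \<open>Geometric representation: V = functions nat => real, coordinates w.r.t. the
  simple roots alpha_0..alpha_(n-1) (only coordinates < n matter).\<close>

definition Bmat :: "(nat \<Rightarrow> nat \<Rightarrow> enat) \<Rightarrow> nat \<Rightarrow> nat \<Rightarrow> real" where
  "Bmat m i j = (if i = j then 2 else
      (case m i j of enat k \<Rightarrow> - 2 * cos (pi / real k) | \<infinity> \<Rightarrow> - 2))"

definition Bform :: "nat \<Rightarrow> (nat \<Rightarrow> nat \<Rightarrow> enat) \<Rightarrow> (nat \<Rightarrow> real) \<Rightarrow> (nat \<Rightarrow> real) \<Rightarrow> real" where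
  "Bform n m u v = (\<Sum>i<n. \<Sum>j<n. u i * v j * Bmat m i j)"

definition simple_root :: "nat \<Rightarrow> nat \<Rightarrow> real" where
  "simple_root k = (\<lambda>i. if i = k then 1 else 0)"

definition sref :: "nat \<Rightarrow> (nat \<Rightarrow> nat \<Rightarrow> enat) \<Rightarrow> nat \<Rightarrow> (nat \<Rightarrow> real) \<Rightarrow> (nat \<Rightarrow> real)" where
  "sref n m i v = (\<lambda>k. v k - Bform n m v (simple_root i) * simple_root i k)"

definition act :: "nat \<Rightarrow> (nat \<Rightarrow> nat \<Rightarrow> enat) \<Rightarrow> nat list \<Rightarrow> (nat \<Rightarrow> real) \<Rightarrow> (nat \<Rightarrow> real)" where
  "act n m w v = foldr (sref n m) w v"

definition root_of :: "nat \<Rightarrow> (nat \<Rightarrow> nat \<Rightarrow> enat) \<Rightarrow> nat list \<Rightarrow> (nat \<Rightarrow> real)" where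
  "root_of n m t = (THE \<beta>. (\<forall>i<n. 0 \<le> \<beta> i) \<and>
      (\<exists>w k. k < n \<and> set w \<subseteq> {..<n} \<and> \<beta> = act n m w (simple_root k) \<and>
             coxeq n m (w @ [k] @ rev w) t))"

definition coxeter_word :: "nat \<Rightarrow> nat list \<Rightarrow> bool" where
  "coxeter_word n y \<longleftrightarrow> distinct y \<and> set y = {..<n}"

definition is_initial :: "nat \<Rightarrow> (nat \<Rightarrow> nat \<Rightarrow> enat) \<Rightarrow> nat list \<Rightarrow> nat \<Rightarrow> bool" where
  "is_initial n m c x \<longleftrightarrow>
     (\<exists>y. coxeter_word n y \<and> y \<noteq> [] \<and> hd y = x \<and> coxeq n m y c)"

fun admissible :: "nat \<Rightarrow> (nat \<Rightarrow> nat \<Rightarrow> enat) \<Rightarrow> nat list \<Rightarrow> nat list \<Rightarrow> bool" where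
  "admissible n m c [] = True"
| "admissible n m c (x # xs) =
     (is_initial n m c x \<and> admissible n m ([x] @ c @ [x]) xs)"

text \<open>omega_c for c = s_(y1) ... s_(yn), extended bilinearly.\<close>
definition before :: "nat list \<Rightarrow> nat \<Rightarrow> nat \<Rightarrow> bool" where
  "before y a b \<longleftrightarrow> (\<exists>p q. p < q \<and> q < length y \<and> y ! p = a \<and> y ! q = b)"

definition omega_simple :: "(nat \<Rightarrow> nat \<Rightarrow> enat) \<Rightarrow> nat list \<Rightarrow> nat \<Rightarrow> nat \<Rightarrow> real" where
  "omega_simple m y a b =
     (if before y a b then Bmat m a b else if before y b a then - Bmat m a b else 0)"

definition omega :: "nat \<Rightarrow> (nat \<Rightarrow> nat \<Rightarrow> enat) \<Rightarrow> nat list \<Rightarrow> (nat \<Rightarrow> real) \<Rightarrow> (nat \<Rightarrow> real) \<Rightarrow> real" where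
  "omega n m y u v = (\<Sum>a<n. \<Sum>b<n. u a * v b * omega_simple m y a b)"

text \<open>The reflection t_i (0-indexed) of a word xs:
  s_(x_0)...s_(x_(i-1)) s_(x_i) s_(x_(i-1)) ... s_(x_0).\<close>
definition refl_word :: "nat list \<Rightarrow> nat \<Rightarrow> nat list" where
  "refl_word xs i = take i xs @ [xs ! i] @ rev (take i xs)"

end

theory Submission
  imports Defs
begin

text \<open>We work throughout in the geometric representation. The braid relations act trivially
  (a rank-two computation with the Chebyshev polynomials \<open>sin (k t) / sin t\<close>), and the usual
  induction on length, reducing to a dihedral subgroup, shows that \<open>w \<alpha>\<^sub>s\<close> is a positive root
  whenever \<open>\<ell>(w s) > \<ell>(w)\<close>. This makes the representation faithful and identifies
  \<open>\<alpha>\<^sub>t\<^sub>i\<close> with \<open>s\<^sub>x\<^sub>1 \<cdots> s\<^sub>x\<^sub>i\<^sub>-\<^sub>1 \<alpha>\<^sub>x\<^sub>i\<close>.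

  The form \<open>\<omega>\<^sub>c\<close> depends only on the group element \<open>c\<close> (a generator \<open>x\<close> that does not commute
  with \<open>a\<close> can never pass \<open>a\<close> in a reduced expression of \<open>c\<close>), and for an initial \<open>x\<close> one has
  \<open>\<omega>\<^sub>s\<^sub>x\<^sub>c\<^sub>s\<^sub>x(u, v) = \<omega>\<^sub>c(s\<^sub>x u, s\<^sub>x v)\<close>. Hence removing \<open>x\<^sub>1\<close> from the admissible
  sequence handles all pairs with \<open>i > 1\<close> by induction. For \<open>i = 1\<close> and the positive root
  \<open>\<beta> = \<alpha>\<^sub>t\<^sub>j\<close> one computes \<open>\<omega>\<^sub>c(\<alpha>\<^sub>x\<^sub>1, \<beta>) = \<Sum>\<^sub>b\<^sub>\<noteq>\<^sub>x\<^sub>1 \<beta>\<^sub>b B(\<alpha>\<^sub>x\<^sub>1, \<alpha>\<^sub>b) \<le> 0\<close>;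
  if it vanishes then \<open>B(\<alpha>\<^sub>x\<^sub>1, \<beta>) = 2 \<beta>\<^sub>x\<^sub>1\<close>, and positivity of \<open>s\<^sub>x\<^sub>1 \<beta>\<close> forces
  \<open>B(\<alpha>\<^sub>t\<^sub>1, \<alpha>\<^sub>t\<^sub>j) = 0\<close>. Reflections in orthogonal roots commute on \<open>V\<close>, hence in \<open>W\<close>.\<close>

section \<open>Bilinear forms in coordinates\<close>

definition bilin :: "nat \<Rightarrow> (nat \<Rightarrow> nat \<Rightarrow> real) \<Rightarrow> (nat \<Rightarrow> real) \<Rightarrow> (nat \<Rightarrow> real) \<Rightarrow> real" where
  "bilin n Q u v = (\<Sum>a<n. \<Sum>b<n. u a * v b * Q a b)"

lemma Bform_eq_bilin: "Bform n m = bilin n (Bmat m)"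
  by (simp add: fun_eq_iff Bform_def bilin_def)

lemma omega_eq_bilin: "omega n m y = bilin n (omega_simple m y)"
  by (simp add: fun_eq_iff omega_def bilin_def)

lemma bilin_linear_left:
  "bilin n Q (\<lambda>i. p * u i + q * w i) v = p * bilin n Q u v + q * bilin n Q w v"
  unfolding bilin_def by (simp add: algebra_simps sum.distrib sum_distrib_left)

lemma bilin_linear_right:
  "bilin n Q v (\<lambda>i. p * u i + q * w i) = p * bilin n Q v u + q * bilin n Q v w"
  unfolding bilin_def by (simp add: algebra_simps sum.distrib sum_distrib_left)

lemma bilin_add_form: "bilin n (\<lambda>a b. Q a b + R a b) u v = bilin n Q u v + bilin n R u v"
  unfolding bilin_def by (simp add: algebra_simps sum.distrib)

lemma bilin_cong: "(\<And>a b. a < n \<Longrightarrow> b < n \<Longrightarrow> Q a b = R a b) \<Longrightarrow> bilin n Q u v = bilin n R u v"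
  unfolding bilin_def by (intro sum.cong refl) auto

lemma bilin_sym:
  "(\<And>a b. a < n \<Longrightarrow> b < n \<Longrightarrow> Q a b = Q b a) \<Longrightarrow> bilin n Q u v = bilin n Q v u"
  unfolding bilin_def by (subst sum.swap) (auto intro!: sum.cong simp: mult.commute)

lemma bilin_zero_left: "(\<And>i. i < n \<Longrightarrow> u i = 0) \<Longrightarrow> bilin n Q u v = 0"
  by (simp add: bilin_def)

lemma sum_lessThan_except:
  "x < (n::nat) \<Longrightarrow> (\<Sum>b<n. f b * (if b = x then 0 else g b)) = (\<Sum>b<n. f b * g b) - f x * (g x :: real)"
proof -
  assume x: "x < n"
  have "(\<Sum>b<n. f b * (if b = x then 0 else g b)) = (\<Sum>b<n. f b * g b - (if b = x then f b * g b else 0))"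
    by (intro sum.cong refl) auto
  also have "\<dots> = (\<Sum>b<n. f b * g b) - f x * g x" using x by (simp add: sum_subtractf)
  finally show ?thesis .
qed

lemma bilin_simple_root_right: "k < n \<Longrightarrow> bilin n Q u (simple_root k) = (\<Sum>a<n. u a * Q a k)"
  by (simp add: bilin_def simple_root_def if_distrib[of "\<lambda>c. _ * c * _"] cong: if_cong)

lemma bilin_simple_root_left: "k < n \<Longrightarrow> bilin n Q (simple_root k) v = (\<Sum>b<n. v b * Q k b)"
  by (simp add: bilin_def simple_root_def if_distrib[of "\<lambda>c. c * _ * _"] sum.swap[of _ "{..<n}"]
      cong: if_cong)

lemma bilin_row:
  "x < n \<Longrightarrow> bilin n (\<lambda>a b. if a = x then f b else 0) u v = u x * (\<Sum>b<n. v b * f b)"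
  by (simp add: bilin_def if_distrib[of "\<lambda>c. _ * c"] sum_distrib_left mult.assoc
      sum.swap[of _ "{..<n}"] cong: if_cong)

lemma bilin_col:
  "x < n \<Longrightarrow> bilin n (\<lambda>a b. if b = x then g a else 0) u v = v x * (\<Sum>a<n. u a * g a)"
proof -
  assume x: "x < n"
  have "bilin n (\<lambda>a b. if b = x then g a else 0) u v = bilin n (\<lambda>b a. if b = x then g a else 0) v u"
    unfolding bilin_def by (subst sum.swap) (auto intro!: sum.cong simp: mult.commute)
  then show ?thesis using bilin_row[OF x, of g v u] by simp
qed

section \<open>Chebyshev polynomials and alternating words\<close>

text \<open>Shifted by one: \<open>chebyshev_U c k\<close> is \<open>U\<^sub>k\<^sub>-\<^sub>1(c)\<close>.\<close>

fun chebyshev_U :: "real \<Rightarrow> nat \<Rightarrow> real" where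
  "chebyshev_U c 0 = 0"
| "chebyshev_U c (Suc 0) = 1"
| "chebyshev_U c (Suc (Suc k)) = 2 * c * chebyshev_U c (Suc k) - chebyshev_U c k"

lemma chebyshev_U_cos_mult_sin: "chebyshev_U (cos t) k * sin t = sin (real k * t)"
proof (induction "cos t" k rule: chebyshev_U.induct)
  case (3 k)
  have e1: "sin (real (Suc (Suc k)) * t) = sin (real (Suc k) * t + t)"
    by (simp add: algebra_simps)
  have e2: "sin (real k * t) = sin (real (Suc k) * t - t)"
    by (simp add: algebra_simps)
  have "chebyshev_U (cos t) (Suc (Suc k)) * sin t
      = 2 * cos t * (chebyshev_U (cos t) (Suc k) * sin t) - chebyshev_U (cos t) k * sin t"
    by (simp add: algebra_simps)
  also have "\<dots> = 2 * cos t * sin (real (Suc k) * t) - sin (real k * t)"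
    using 3 by simp
  also have "\<dots> = sin (real (Suc (Suc k)) * t)"
    unfolding e1 e2 sin_add sin_diff by (simp add: algebra_simps)
  finally show ?case .
qed simp_all

lemma chebyshev_U_one: "chebyshev_U 1 k = real k"
  by (induction "1::real" k rule: chebyshev_U.induct) simp_all

lemma concat_replicate_append_comm: "concat (replicate K xs) @ xs = xs @ concat (replicate K xs)"
  by (induction K) simp_all

lemma rev_concat_replicate_pair: "rev (concat (replicate K [a, b])) = concat (replicate K [b, a])"
proof (induction K)
  case (Suc K)
  then show ?case using concat_replicate_append_comm[of K "[b,a]"] by simp
qed simp

lemma alternating_concat_replicate: "a \<noteq> b \<Longrightarrow> successively (\<noteq>) (concat (replicate K [a, b])) \<and>
   (0 < K \<longrightarrow> hd (concat (replicate K [a, b])) = a \<and> last (concat (replicate K [a, b])) = b)"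
proof (induction K)
  case (Suc K)
  then show ?case by (cases K) auto
qed simp

lemma set_concat_replicate_pair: "set (concat (replicate K [a, b])) \<subseteq> {a, b}"
  by (induction K) auto

lemma length_concat_replicate_pair: "length (concat (replicate K [a, b])) = 2 * K"
  by (induction K) auto

lemma not_successively_neq_split: "\<not> successively (\<noteq>) u \<Longrightarrow> \<exists>p a q. u = p @ [a, a] @ q"
proof (induction u)
  case (Cons x u')
  show ?case
  proof (cases "u' \<noteq> [] \<and> x = hd u'")
    case True
    then obtain u'' where "u' = x # u''" by (cases u') auto
    then show ?thesis by (intro exI[of _ "[]"]) auto
  next
    case False
    then have "\<not> successively (\<noteq>) u'" using Cons.prems by (cases u') auto
    then obtain p a q where "u' = p @ [a, a] @ q" using Cons.IH by blast
    then show ?thesis by (intro exI[of _ "x # p"]) auto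
  qed
qed simp

lemma alternating_eq_concat_replicate: "a \<noteq> b \<Longrightarrow> set w \<subseteq> {a, b} \<Longrightarrow> successively (\<noteq>) w \<Longrightarrow> length w = 2 * K \<Longrightarrow>
   (w \<noteq> [] \<longrightarrow> hd w = a) \<Longrightarrow> w = concat (replicate K [a, b])"
proof (induction K arbitrary: w)
  case (Suc K)
  then obtain x y w' where w: "w = x # y # w'"
    by (cases w; cases "tl w") auto
  have xy: "x = a" "y = b" using Suc.prems w by auto
  have "w' \<noteq> [] \<longrightarrow> hd w' = a" using Suc.prems w xy by (cases w') auto
  then have "w' = concat (replicate K [a, b])"
    using Suc.prems w by (intro Suc.IH) (auto simp: successively_Cons)
  then show ?case using w xy by simp
qed simp

section \<open>Relative order of letters in a word\<close>

lemma before_iff_split: "before y a b \<longleftrightarrow> (\<exists>u v. y = u @ a # v \<and> b \<in> set v)"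
proof
  assume "before y a b"
  then obtain p q where pq: "p < q" "q < length y" "y ! p = a" "y ! q = b"
    unfolding before_def by blast
  define u where "u = take p y"
  define v where "v = drop (Suc p) y"
  have "y = u @ a # v" using pq id_take_nth_drop[of p y] by (simp add: u_def v_def)
  moreover have "b \<in> set v"
  proof -
    have "v ! (q - Suc p) = b" using pq by (simp add: v_def)
    moreover have "q - Suc p < length v" using pq by (simp add: v_def)
    ultimately show ?thesis using nth_mem by blast
  qed
  ultimately show "\<exists>u v. y = u @ a # v \<and> b \<in> set v" by blast
next
  assume "\<exists>u v. y = u @ a # v \<and> b \<in> set v"
  then obtain u v where uv: "y = u @ a # v" "b \<in> set v" by blast
  then obtain k where k: "k < length v" "v ! k = b" by (metis in_set_conv_nth)
  show "before y a b" unfolding before_def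
    by (rule exI[of _ "length u"], rule exI[of _ "length u + Suc k"]) (use uv k in \<open>auto simp: nth_append\<close>)
qed

lemma before_Cons_iff: "before (x # z) a b \<longleftrightarrow> (a = x \<and> b \<in> set z) \<or> before z a b"
proof
  assume "before (x # z) a b"
  then obtain u v where uv: "x # z = u @ a # v" "b \<in> set v" using before_iff_split by blast
  show "(a = x \<and> b \<in> set z) \<or> before z a b"
  proof (cases u)
    case Nil then show ?thesis using uv by auto
  next
    case (Cons c u') then show ?thesis using uv before_iff_split by auto
  qed
next
  assume "(a = x \<and> b \<in> set z) \<or> before z a b"
  then show "before (x # z) a b"
  proof
    assume "a = x \<and> b \<in> set z" then show ?thesis using before_iff_split[of "x # z"] by force
  next
    assume "before z a b"
    then obtain u v where "z = u @ a # v" "b \<in> set v" using before_iff_split by blast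
    then show ?thesis using before_iff_split[of "x # z"] by (metis append_Cons)
  qed
qed

lemma before_snoc_iff: "before (z @ [x]) a b \<longleftrightarrow> (b = x \<and> a \<in> set z) \<or> before z a b"
proof
  assume "before (z @ [x]) a b"
  then obtain u v where uv: "z @ [x] = u @ a # v" "b \<in> set v" using before_iff_split by blast
  show "(b = x \<and> a \<in> set z) \<or> before z a b"
  proof (cases v rule: rev_cases)
    case Nil then show ?thesis using uv by auto
  next
    case (snoc v' c)
    then have "z = u @ a # v'" "x = c" using uv by auto
    then show ?thesis using uv snoc before_iff_split by auto
  qed
next
  assume "(b = x \<and> a \<in> set z) \<or> before z a b"
  then show "before (z @ [x]) a b"
  proof
    assume h: "b = x \<and> a \<in> set z"
    then obtain u v where "z = u @ a # v" by (metis split_list)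
    then show ?thesis using h before_iff_split[of "z @ [x]"] by force
  next
    assume "before z a b"
    then obtain u v where "z = u @ a # v" "b \<in> set v" using before_iff_split by blast
    then show ?thesis using before_iff_split[of "z @ [x]"] by force
  qed
qed

lemma before_distinct: "distinct y \<Longrightarrow> before y a b \<Longrightarrow> a \<noteq> b \<and> a \<in> set y \<and> b \<in> set y"
  using before_iff_split[of y a b] by auto

lemma before_remove_middle:
  assumes "distinct (p @ x # q)" "before (p @ x # q) a b" "a \<noteq> x" "b \<noteq> x"
  shows "before (p @ q) a b"
proof -
  obtain u v where uv: "p @ x # q = u @ a # v" "b \<in> set v" using assms(2) before_iff_split by blast
  have "removeAll x (p @ x # q) = p @ q" using assms(1) by simp
  then have "p @ q = removeAll x u @ a # removeAll x v" using uv assms(3) by simp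
  moreover have "b \<in> set (removeAll x v)" using uv assms(4) by simp
  ultimately show ?thesis using before_iff_split by blast
qed

lemma before_middle_imp_mem_prefix:
  assumes "distinct (p @ x # q)" "before (p @ x # q) a x"
  shows "a \<in> set p"
proof -
  obtain u v where uv: "p @ x # q = u @ a # v" "x \<in> set v" using assms(2) before_iff_split by blast
  obtain v1 v2 where v: "v = v1 @ x # v2" using uv(2) by (metis split_list)
  have "p @ x # q = (u @ a # v1) @ x # v2" using uv v by simp
  moreover have "x \<notin> set p" "x \<notin> set q" using assms(1) by auto
  moreover have d: "distinct ((u @ a # v1) @ x # v2)" using assms(1) uv(1) v by simp
  then have "x \<notin> set (u @ a # v1)" by auto
  moreover have "x \<notin> set v2" using d by auto
  ultimately have "p = u @ a # v1" using append_Cons_eq_iff by metis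
  then show ?thesis by simp
qed

lemma before_move_front:
  assumes "distinct (p @ x # q)" "before (p @ x # q) a b" "b = x \<longrightarrow> a \<notin> set p"
  shows "(a = x \<and> b \<in> set (p @ q)) \<or> before (p @ q) a b"
proof (cases "a = x")
  case True
  then show ?thesis using before_distinct[OF assms(1,2)] by auto
next
  case False
  then show ?thesis
    using assms before_remove_middle[OF assms(1,2)] before_middle_imp_mem_prefix[OF assms(1)] by blast
qed

section \<open>The geometric representation\<close>

locale coxeter_system =
  fixes n :: nat and m :: "nat \<Rightarrow> nat \<Rightarrow> enat"
  assumes coxeter_matrix: "coxeter_matrix n m"
begin

abbreviation "\<alpha> \<equiv> simple_root"
abbreviation "B \<equiv> Bform n m"
abbreviation "\<sigma> \<equiv> sref n m"
abbreviation "\<rho> \<equiv> act n m"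
abbreviation "ceq \<equiv> coxeq n m"

lemma m_sym: "a < n \<Longrightarrow> b < n \<Longrightarrow> a \<noteq> b \<Longrightarrow> m a b = m b a"
  using coxeter_matrix unfolding coxeter_matrix_def by auto

lemma m_ge_2: "a < n \<Longrightarrow> b < n \<Longrightarrow> a \<noteq> b \<Longrightarrow> 2 \<le> m a b"
  using coxeter_matrix unfolding coxeter_matrix_def by auto

lemma Bmat_diag[simp]: "Bmat m a a = 2" by (simp add: Bmat_def)

lemma Bmat_sym: "a < n \<Longrightarrow> b < n \<Longrightarrow> Bmat m a b = Bmat m b a"
  by (cases "a = b") (auto simp: Bmat_def m_sym)

lemma Bmat_nonpos: assumes "a < n" "b < n" "a \<noteq> b" shows "Bmat m a b \<le> 0"
proof (cases "m a b")
  case (enat k)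
  with m_ge_2[OF assms] have k: "2 \<le> k" by (simp add: numeral_eq_enat)
  have k0: "0 \<le> pi / real k" by simp
  have "pi / real k \<le> pi / 2" using k by (intro divide_left_mono) auto
  then have "0 \<le> cos (pi / real k)"
    using k0 pi_gt_zero by (intro cos_ge_zero) linarith+
  then show ?thesis using enat assms(3) by (simp add: Bmat_def)
next
  case infinity then show ?thesis using assms(3) by (simp add: Bmat_def)
qed

lemma simple_root_same[simp]: "\<alpha> k k = 1" and simple_root_other[simp]: "i \<noteq> k \<Longrightarrow> \<alpha> k i = 0"
  by (auto simp: simple_root_def)

lemma Bform_simple_root_right: "k < n \<Longrightarrow> B u (\<alpha> k) = (\<Sum>i<n. u i * Bmat m i k)"
  by (simp add: Bform_eq_bilin bilin_simple_root_right)

lemma Bform_simple_root_left: "k < n \<Longrightarrow> B (\<alpha> k) v = (\<Sum>j<n. v j * Bmat m k j)"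
  by (simp add: Bform_eq_bilin bilin_simple_root_left)

lemma Bform_sym: "B u v = B v u"
  unfolding Bform_eq_bilin by (rule bilin_sym) (rule Bmat_sym)

lemma Bform_linear_left: "B (\<lambda>i. p * u i + q * w i) v = p * B u v + q * B w v"
  unfolding Bform_eq_bilin by (rule bilin_linear_left)

lemma Bform_linear_right: "B v (\<lambda>i. p * u i + q * w i) = p * B v u + q * B v w"
  unfolding Bform_eq_bilin by (rule bilin_linear_right)

lemma Bform_simple_roots: "a < n \<Longrightarrow> b < n \<Longrightarrow> B (\<alpha> a) (\<alpha> b) = Bmat m a b"
  by (simp add: Bform_simple_root_left) (simp add: simple_root_def if_distrib[of "\<lambda>c. c * _"] cong: if_cong)

lemma sref_eq_combination: "\<sigma> i v = (\<lambda>k. 1 * v k + (- B v (\<alpha> i)) * \<alpha> i k)"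
  by (simp add: sref_def)

lemma sref_other_coord: "k \<noteq> i \<Longrightarrow> \<sigma> i v k = v k"
  by (simp add: sref_def)

lemma sref_linear: "\<sigma> i (\<lambda>k. p * x k + q * y k) = (\<lambda>k. p * \<sigma> i x k + q * \<sigma> i y k)"
  by (auto simp: sref_def Bform_linear_left algebra_simps)

lemma Bform_sref_simple_root: "i < n \<Longrightarrow> B (\<sigma> i v) (\<alpha> i) = - B v (\<alpha> i)"
proof -
  assume i: "i < n"
  have "B (\<sigma> i v) (\<alpha> i) = 1 * B v (\<alpha> i) + (- B v (\<alpha> i)) * B (\<alpha> i) (\<alpha> i)"
    by (subst sref_eq_combination, rule Bform_linear_left)
  also have "\<dots> = - B v (\<alpha> i)" using i by (simp add: Bform_simple_roots)
  finally show ?thesis .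
qed

lemma sref_sref[simp]: "i < n \<Longrightarrow> \<sigma> i (\<sigma> i v) = v"
  using Bform_sref_simple_root by (auto simp: sref_def algebra_simps)

lemma sref_fix: "B v (\<alpha> i) = 0 \<Longrightarrow> \<sigma> i v = v"
  by (simp add: sref_def)

lemma Bform_sref: assumes "i < n" shows "B (\<sigma> i u) (\<sigma> i v) = B u v"
proof -
  let ?p = "B u (\<alpha> i)" and ?q = "B v (\<alpha> i)"
  have "B (\<sigma> i u) (\<sigma> i v) = 1 * B u (\<sigma> i v) + (- ?p) * B (\<alpha> i) (\<sigma> i v)"
    by (subst sref_eq_combination, rule Bform_linear_left)
  also have "B u (\<sigma> i v) = 1 * B u v + (-?q) * B u (\<alpha> i)"
    by (subst sref_eq_combination, rule Bform_linear_right)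
  also have "B (\<alpha> i) (\<sigma> i v) = 1 * B (\<alpha> i) v + (-?q) * B (\<alpha> i) (\<alpha> i)"
    by (subst sref_eq_combination, rule Bform_linear_right)
  finally show ?thesis using assms by (simp add: Bform_simple_roots Bform_sym[of "\<alpha> i" v] algebra_simps)
qed

lemma act_Nil[simp]: "\<rho> [] v = v" by (simp add: act_def)
lemma act_Cons[simp]: "\<rho> (i # w) v = \<sigma> i (\<rho> w v)" by (simp add: act_def)
lemma act_append: "\<rho> (u @ w) v = \<rho> u (\<rho> w v)" by (simp add: act_def)

lemma act_linear: "\<rho> w (\<lambda>k. p * x k + q * y k) = (\<lambda>k. p * \<rho> w x k + q * \<rho> w y k)"
  by (induction w) (simp_all add: sref_linear)

lemma act_coord_notin: "k \<notin> set w \<Longrightarrow> \<rho> w v k = v k"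
  by (induction w) (auto simp: sref_other_coord)

lemma act_rev_cancel: "set w \<subseteq> {..<n} \<Longrightarrow> \<rho> w (\<rho> (rev w) x) = x"
  by (induction w arbitrary: x) (auto simp: act_append)

lemma act_rev_cancel': "set w \<subseteq> {..<n} \<Longrightarrow> \<rho> (rev w) (\<rho> w x) = x"
  using act_rev_cancel[of "rev w"] by simp

lemma Bform_act: "set w \<subseteq> {..<n} \<Longrightarrow> B (\<rho> w u) (\<rho> w v) = B u v"
  by (induction w) (auto simp: Bform_sref)

lemma act_fix: "set w \<subseteq> {a, b} \<Longrightarrow> B z (\<alpha> a) = 0 \<Longrightarrow> B z (\<alpha> b) = 0 \<Longrightarrow> \<rho> w z = z"
  by (induction w) (auto simp: sref_fix)

section \<open>Rank two: the braid relations act trivially\<close>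

definition cos_angle :: "nat \<Rightarrow> nat \<Rightarrow> real" where "cos_angle a b = - Bmat m a b / 2"

lemma cos_angle_sym: "a < n \<Longrightarrow> b < n \<Longrightarrow> cos_angle a b = cos_angle b a"
  by (simp add: cos_angle_def Bmat_sym)

lemma cos_angle_self[simp]: "cos_angle a a = -1" by (simp add: cos_angle_def)

lemma sref_simple_root_other: "a < n \<Longrightarrow> b < n \<Longrightarrow> \<sigma> a (\<alpha> b) = (\<lambda>k. \<alpha> b k + 2 * cos_angle a b * \<alpha> a k)"
  by (auto simp: sref_def Bform_simple_roots cos_angle_def Bmat_sym)

lemma sref_simple_root_self: "a < n \<Longrightarrow> \<sigma> a (\<alpha> a) = (\<lambda>k. - \<alpha> a k)"
  by (auto simp: sref_def Bform_simple_roots)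

lemma act_alternating_simple_root:
  assumes ab: "a < n" "b < n" "a \<noteq> b"
  shows "set u \<subseteq> {a, b} \<Longrightarrow> successively (\<noteq>) u \<Longrightarrow> (u \<noteq> [] \<longrightarrow> last u = b) \<Longrightarrow>
    \<rho> u (\<alpha> a) = (\<lambda>k. chebyshev_U (cos_angle a b) (Suc (length u)) * \<alpha> (if u = [] then a else hd u) k
        + chebyshev_U (cos_angle a b) (length u) * \<alpha> (if (if u = [] then a else hd u) = a then b else a) k)"
proof (induction u)
  case Nil
  then show ?case by simp
next
  case (Cons x u')
  note IH0 = Cons.IH and P0 = Cons.prems
  show ?case
  proof (cases u')
    case Nil
    then have "x = b" using Cons.prems by simp
    then show ?thesis using Nil ab
      by (auto simp: sref_simple_root_other cos_angle_sym numeral_2_eq_2)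
  next
    case (Cons y u'')
    note Cons2 = this
    have xy: "x \<noteq> y" "x \<in> {a,b}" "y \<in> {a,b}" using P0 Cons2 by auto
    have IH: "\<rho> u' (\<alpha> a) = (\<lambda>k. chebyshev_U (cos_angle a b) (Suc (length u')) * \<alpha> y k
        + chebyshev_U (cos_angle a b) (length u') * \<alpha> x k)"
      using IH0 P0 Cons2 xy by auto
    have xn: "x < n" "y < n" using xy ab by auto
    have cv: "cos_angle x y = cos_angle a b" using xy ab cos_angle_sym by auto
    have "\<rho> (x # u') (\<alpha> a) = \<sigma> x (\<lambda>k. chebyshev_U (cos_angle a b) (Suc (length u')) * \<alpha> y k
        + chebyshev_U (cos_angle a b) (length u') * \<alpha> x k)" using IH by simp
    also have "\<dots> = (\<lambda>k. chebyshev_U (cos_angle a b) (Suc (length u')) * (\<alpha> y k + 2 * cos_angle a b * \<alpha> x k)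
        + chebyshev_U (cos_angle a b) (length u') * (- \<alpha> x k))"
      unfolding sref_linear using xn xy cv by (simp add: sref_simple_root_other sref_simple_root_self)
    also have "\<dots> = (\<lambda>k. chebyshev_U (cos_angle a b) (Suc (length (x # u'))) * \<alpha> x k
        + chebyshev_U (cos_angle a b) (length (x # u')) * \<alpha> y k)"
      by (auto simp: algebra_simps)
    finally show ?thesis using xy by auto
  qed
qed

lemma cos_angle_enat:
  assumes "a \<noteq> b" "m a b = enat K" shows "cos_angle a b = cos (pi / real K)"
  using assms by (simp add: cos_angle_def Bmat_def)

lemma cos_angle_infinity: "a \<noteq> b \<Longrightarrow> m a b = \<infinity> \<Longrightarrow> cos_angle a b = 1"
  by (simp add: cos_angle_def Bmat_def)

lemma act_braid_word_simple_root:
  assumes ab: "a < n" "b < n" "a \<noteq> b" and K: "m a b = enat K"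
  shows "\<rho> (concat (replicate K [a, b])) (\<alpha> a) = \<alpha> a"
proof -
  have K2: "2 \<le> K" using m_ge_2[OF ab] K by (simp add: numeral_eq_enat)
  define t where "t = pi / real K"
  have st: "sin t > 0" using K2 by (auto simp: t_def field_simps intro!: sin_gt_zero)
  have U: "chebyshev_U (cos t) j = sin (real j * t) / sin t" for j
    using chebyshev_U_cos_mult_sin[of t j] st by (simp add: field_simps)
  have U0: "chebyshev_U (cos t) (2 * K) = 0"
  proof -
    have "real (2 * K) * t = 2 * pi" using K2 by (simp add: t_def)
    then show ?thesis by (simp only: U) simp
  qed
  have U1: "chebyshev_U (cos t) (Suc (2 * K)) = 1"
  proof -
    have "real (Suc (2 * K)) * t = t + real 2 * pi" using K2 by (simp add: t_def algebra_simps)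
    then show ?thesis using st by (simp add: U sin_add)
  qed
  have cv: "cos_angle a b = cos t" using cos_angle_enat[OF ab(3) K] by (simp add: t_def)
  have "successively (\<noteq>) (concat (replicate K [a, b]))" "hd (concat (replicate K [a, b])) = a"
    "last (concat (replicate K [a, b])) = b" "concat (replicate K [a, b]) \<noteq> []"
    using alternating_concat_replicate[of a b K] ab K2 length_concat_replicate_pair[of K a b] by auto
  then show ?thesis
    using act_alternating_simple_root[OF ab, of "concat (replicate K [a, b])"]
      set_concat_replicate_pair[of K a b]
    by (simp add: length_concat_replicate_pair U0 U1 cv)
qed

lemma act_braid_word_simple_roots:
  assumes ab: "a < n" "b < n" "a \<noteq> b" and K: "m a b = enat K"
  shows "\<rho> (concat (replicate K [a, b])) (\<alpha> a) = \<alpha> a" "\<rho> (concat (replicate K [a, b])) (\<alpha> b) = \<alpha> b"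
proof -
  define R where "R = concat (replicate K [a, b])"
  have "set R \<subseteq> {..<n}" using set_concat_replicate_pair[of K a b] ab unfolding R_def by auto
  moreover have "\<rho> (rev R) (\<alpha> b) = \<alpha> b"
    unfolding R_def rev_concat_replicate_pair
    using act_braid_word_simple_root[of b a K] ab K m_sym by simp
  ultimately show "\<rho> R (\<alpha> b) = \<alpha> b" by (metis act_rev_cancel)
  show "\<rho> R (\<alpha> a) = \<alpha> a" unfolding R_def by (rule act_braid_word_simple_root[OF assms])
qed

text \<open>The hypothesis says that \<open>B\<close> is positive definite on the span of \<open>\<alpha>\<^sub>a, \<alpha>\<^sub>b\<close>.\<close>

lemma Bform_orthogonal_decomposition:
  assumes ab: "a < n" "b < n" "a \<noteq> b" and c: "cos_angle a b * cos_angle a b < 1"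
  obtains la mu z where "x = (\<lambda>k. 1 * (la * \<alpha> a k + mu * \<alpha> b k) + 1 * z k)"
    and "B z (\<alpha> a) = 0" and "B z (\<alpha> b) = 0"
proof -
  define c where "c = cos_angle a b"
  define A where "A = B x (\<alpha> a)"
  define Bb where "Bb = B x (\<alpha> b)"
  define D where "D = 2 * (1 - c * c)"
  have D0: "D > 0" using c unfolding D_def c_def by simp
  define la where "la = (A + c * Bb) / D"
  define mu where "mu = (Bb + c * A) / D"
  define p where "p = (\<lambda>k. la * \<alpha> a k + mu * \<alpha> b k)"
  define z where "z = (\<lambda>k. 1 * x k + (-1) * p k)"
  have Baa: "B (\<alpha> a) (\<alpha> a) = 2" "B (\<alpha> b) (\<alpha> b) = 2" using ab by (simp_all add: Bform_simple_roots)
  have Bab: "B (\<alpha> a) (\<alpha> b) = - 2 * c" "B (\<alpha> b) (\<alpha> a) = - 2 * c"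
    using cos_angle_sym ab by (simp_all add: Bform_simple_roots c_def cos_angle_def)
  have "B p (\<alpha> a) = (2 * (A + c * Bb) - 2 * c * (Bb + c * A)) / D"
    unfolding p_def Bform_linear_left Baa Bab la_def mu_def
    by (simp add: diff_divide_distrib add_divide_distrib algebra_simps)
  also have "2 * (A + c * Bb) - 2 * c * (Bb + c * A) = A * D" unfolding D_def by (simp add: algebra_simps)
  finally have pa: "B p (\<alpha> a) = A" using D0 by simp
  have "B p (\<alpha> b) = (2 * (Bb + c * A) - 2 * c * (A + c * Bb)) / D"
    unfolding p_def Bform_linear_left Baa Bab la_def mu_def
    by (simp add: diff_divide_distrib add_divide_distrib algebra_simps)
  also have "2 * (Bb + c * A) - 2 * c * (A + c * Bb) = Bb * D" unfolding D_def by (simp add: algebra_simps)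
  finally have pb: "B p (\<alpha> b) = Bb" using D0 by simp
  show thesis
  proof
    show "x = (\<lambda>k. 1 * (la * \<alpha> a k + mu * \<alpha> b k) + 1 * z k)" by (simp add: z_def p_def)
    show "B z (\<alpha> a) = 0" unfolding z_def Bform_linear_left pa A_def by simp
    show "B z (\<alpha> b) = 0" unfolding z_def Bform_linear_left pb Bb_def by simp
  qed
qed

lemma act_braid_word:
  assumes ab: "a < n" "b < n" "a \<noteq> b" and K: "m a b = enat K"
  shows "\<rho> (concat (replicate K [a, b])) x = x"
proof -
  have K2: "2 \<le> K" using m_ge_2[OF ab] K by (simp add: numeral_eq_enat)
  define t where "t = pi / real K"
  have t: "0 < t" "t < pi" using K2 by (auto simp: t_def field_simps)
  have "cos t < 1" using t cos_monotone_0_pi[of 0 t] by simp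
  moreover have "- 1 < cos t" using t cos_monotone_0_pi[of t pi] by simp
  ultimately have "cos t * cos t < 1" using abs_square_less_1[of "cos t"] by (simp add: power2_eq_square)
  then have "cos_angle a b * cos_angle a b < 1" using cos_angle_enat[OF ab(3) K] by (simp add: t_def)
  then obtain la mu z where x: "x = (\<lambda>k. 1 * (la * \<alpha> a k + mu * \<alpha> b k) + 1 * z k)"
    and z: "B z (\<alpha> a) = 0" "B z (\<alpha> b) = 0"
    by (rule Bform_orthogonal_decomposition[OF ab])
  have "\<rho> (concat (replicate K [a, b])) z = z"
    using act_fix[OF _ z] set_concat_replicate_pair[of K a b] by simp
  then show ?thesis
    by (subst (1 2) x) (simp only: act_linear act_braid_word_simple_roots[OF assms])
qed

lemma act_relator: "relator n m r \<Longrightarrow> \<rho> r x = x"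
proof (induction rule: relator.induct)
  case (sq i) then show ?case by simp
next
  case (braid i j k) then show ?case using act_braid_word by simp
qed

lemma act_coxeq: "ceq u v \<Longrightarrow> \<rho> u = \<rho> v"
proof (induction rule: coxeq.induct)
  case (rel r u v) then show ?case by (simp add: fun_eq_iff act_append act_relator)
qed auto

section \<open>Word equivalence and length\<close>

lemma coxeq_context: "ceq u v \<Longrightarrow> ceq (p @ u @ q) (p @ v @ q)"
proof (induction rule: coxeq.induct)
  case (rel r u v) then show ?case using coxeq.rel[of n m r "p @ u" "v @ q"] by simp
qed (auto intro: coxeq.intros)

lemma coxeq_append: "ceq u u' \<Longrightarrow> ceq v v' \<Longrightarrow> ceq (u @ v) (u' @ v')"
  using coxeq_context[of u u' "[]" v] coxeq_context[of v v' u' "[]"] by (auto intro: coxeq.trans)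

lemma coxeq_trans_iff: "ceq u w \<Longrightarrow> ceq v u \<longleftrightarrow> ceq v w"
  by (meson coxeq.sym coxeq.trans)

lemma coxeq_cancel: "i < n \<Longrightarrow> ceq (p @ [i, i] @ q) (p @ q)"
  by (rule coxeq.rel) (rule relator.sq)

lemma coxeq_relator_Nil: "relator n m r \<Longrightarrow> ceq r []"
  using coxeq.rel[of n m r "[]" "[]"] by simp

lemma coxeq_rev_cancel: "set w \<subseteq> {..<n} \<Longrightarrow> ceq (w @ rev w) [] \<and> ceq (rev w @ w) []"
proof (induction w)
  case Nil then show ?case by (simp add: coxeq.refl)
next
  case (Cons a w)
  then have a: "a < n" and IH: "ceq (w @ rev w) []" "ceq (rev w @ w) []" by auto
  have "ceq ((a # w) @ rev (a # w)) [a, a]" using coxeq_context[OF IH(1), of "[a]" "[a]"] by simp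
  moreover have "ceq [a, a] []" using coxeq_cancel[OF a, of "[]" "[]"] by simp
  moreover have "ceq (rev (a # w) @ (a # w)) (rev w @ w)" using coxeq_cancel[OF a] by simp
  ultimately show ?case using IH(2) by (blast intro: coxeq.trans)
qed

lemma relator_even_length_set: "relator n m r \<Longrightarrow> even (length r) \<and> set r \<subseteq> {..<n}"
proof (induction rule: relator.induct)
  case (braid i j k)
  then show ?case using length_concat_replicate_pair[of k i j] set_concat_replicate_pair[of k i j] by auto
qed simp

lemma coxeq_even_length: "ceq u v \<Longrightarrow> even (length u) = even (length v)"
proof (induction rule: coxeq.induct)
  case (rel r u v) then show ?case using relator_even_length_set[of r] by auto
qed auto

lemma coxeq_set_iff: "ceq u v \<Longrightarrow> set u \<subseteq> {..<n} \<longleftrightarrow> set v \<subseteq> {..<n}"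
proof (induction rule: coxeq.induct)
  case (rel r u v) then show ?case using relator_even_length_set[of r] by auto
qed auto

definition word_length :: "nat list \<Rightarrow> nat" where
  "word_length w = (LEAST k. \<exists>v. ceq v w \<and> length v = k)"

lemma word_length_obtain: "\<exists>v. ceq v w \<and> length v = word_length w"
  unfolding word_length_def by (rule LeastI_ex) (use coxeq.refl in blast)

lemma word_length_le: "ceq v w \<Longrightarrow> word_length w \<le> length v"
  unfolding word_length_def by (rule Least_le) blast

lemma word_length_le_length: "word_length w \<le> length w"
  by (rule word_length_le) (rule coxeq.refl)

lemma word_length_cong: "ceq u w \<Longrightarrow> word_length u = word_length w"
  unfolding word_length_def by (simp add: coxeq_trans_iff)

lemma word_length_reduced: "reduced_word n m w \<Longrightarrow> word_length w = length w"
  using word_length_obtain[of w] word_length_le_length[of w] unfolding reduced_word_def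
  by (metis le_antisym)

lemma reduced_wordI: "word_length w = length w \<Longrightarrow> reduced_word n m w"
  unfolding reduced_word_def using word_length_le by fastforce

lemma coxeq_Nil_of_word_length_0: "word_length w = 0 \<Longrightarrow> ceq [] w"
  using word_length_obtain[of w] by auto

lemma even_word_length: "even (word_length w) = even (length w)"
  using word_length_obtain[of w] coxeq_even_length by metis

lemma word_length_append_le: "word_length (x @ y) \<le> word_length x + length y"
proof -
  obtain v where v: "ceq v x" "length v = word_length x" using word_length_obtain by blast
  then have "ceq (v @ y) (x @ y)" by (simp add: coxeq_append coxeq.refl)
  then show ?thesis using word_length_le v(2) by fastforce
qed

lemma word_length_append_le': "word_length (x @ y) \<le> length x + word_length y"
proof -
  obtain v where v: "ceq v y" "length v = word_length y" using word_length_obtain by blast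
  then have "ceq (x @ v) (x @ y)" by (simp add: coxeq_append coxeq.refl)
  then show ?thesis using word_length_le v(2) by fastforce
qed

lemma word_length_append_eq_length:
  "word_length (a @ b) = length (a @ b) \<Longrightarrow> word_length a = length a \<and> word_length b = length b"
  using word_length_append_le[of a b] word_length_append_le'[of a b]
    word_length_le_length[of a] word_length_le_length[of b] by simp

lemma word_length_snoc_neq: "word_length (w @ [s]) \<noteq> word_length w"
  using even_word_length[of w] even_word_length[of "w @ [s]"] by auto

lemma word_length_le_snoc: "s < n \<Longrightarrow> word_length w \<le> word_length (w @ [s]) + 1"
proof -
  assume s: "s < n"
  have "word_length w = word_length ((w @ [s]) @ [s])"
    using word_length_cong[OF coxeq_cancel[OF s, of w "[]"]] by simp
  then show ?thesis using word_length_append_le[of "w @ [s]" "[s]"] by simp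
qed

lemma reduced_word_successively:
  assumes "reduced_word n m u" "set u \<subseteq> {..<n}"
  shows "successively (\<noteq>) u"
proof (rule ccontr)
  assume "\<not> successively (\<noteq>) u"
  then obtain p a q where u: "u = p @ [a, a] @ q" using not_successively_neq_split by blast
  then have "ceq (p @ q) u" using assms(2) coxeq_cancel[of a p q] by (simp add: coxeq.sym)
  then show False using assms(1) u unfolding reduced_word_def by fastforce
qed

section \<open>Positivity of roots\<close>

definition pos_vec :: "(nat \<Rightarrow> real) \<Rightarrow> bool" where "pos_vec v \<longleftrightarrow> (\<forall>i<n. 0 \<le> v i)"
definition neg_vec :: "(nat \<Rightarrow> real) \<Rightarrow> bool" where "neg_vec v \<longleftrightarrow> (\<forall>i<n. v i \<le> 0)"

lemma chebyshev_U_cos_angle_nonneg: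
  assumes ab: "a < n" "b < n" "a \<noteq> b" and j: "enat j \<le> m a b"
  shows "0 \<le> chebyshev_U (cos_angle a b) j"
proof (cases "m a b")
  case infinity
  then show ?thesis using cos_angle_infinity[OF ab(3)] by (simp add: chebyshev_U_one)
next
  case (enat K)
  have K2: "2 \<le> K" using m_ge_2[OF ab] enat by (simp add: numeral_eq_enat)
  define t where "t = pi / real K"
  have t0: "0 < t" using K2 by (simp add: t_def)
  have "real j * t \<le> real K * t" using j enat t0 by (intro mult_right_mono) auto
  then have "real j * t \<le> pi" using K2 by (simp add: t_def)
  then have "0 \<le> chebyshev_U (cos t) j * sin t"
    using t0 chebyshev_U_cos_mult_sin[of t j] by (simp add: sin_ge_zero)
  moreover have "sin t > 0" using K2 by (auto simp: t_def field_simps intro!: sin_gt_zero)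
  ultimately show ?thesis using cos_angle_enat[OF ab(3) enat] by (simp add: t_def zero_le_mult_iff)
qed

lemma act_dihedral_simple_root_nonneg:
  assumes ab: "s < n" "s' < n" "s \<noteq> s'"
    and u: "set u \<subseteq> {s, s'}" "successively (\<noteq>) u" "u \<noteq> [] \<longrightarrow> last u = s'"
    and len: "enat (Suc (length u)) \<le> m s s'"
  obtains p q where "0 \<le> p" "0 \<le> q" "\<rho> u (\<alpha> s) = (\<lambda>k. p * \<alpha> s k + q * \<alpha> s' k)"
proof -
  let ?U = "chebyshev_U (cos_angle s s')"
  have U: "0 \<le> ?U (Suc (length u))" "0 \<le> ?U (length u)"
    using chebyshev_U_cos_angle_nonneg[OF ab] len order_trans[OF _ len] by auto
  define h where "h = (if u = [] then s else hd u)"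
  have hs: "h = s \<or> h = s'" using u(1) hd_in_set by (auto simp: h_def)
  have act: "\<rho> u (\<alpha> s)
      = (\<lambda>k. ?U (Suc (length u)) * \<alpha> h k + ?U (length u) * \<alpha> (if h = s then s' else s) k)"
    using act_alternating_simple_root[OF ab u] by (simp add: h_def)
  from hs show thesis
  proof
    assume "h = s" then show thesis using that[OF U] act by simp
  next
    assume "h = s'" then show thesis
      by (intro that[OF U(2) U(1)]) (simp add: act ab(3)[symmetric] add.commute)
  qed
qed

lemma coxeq_alternating_Nil:
  assumes ab: "a < n" "b < n" "a \<noteq> b" and K: "m a b = enat K"
    and W: "set W \<subseteq> {a, b}" "successively (\<noteq>) W" "length W = 2 * K"
  shows "ceq W []"
proof (cases "W \<noteq> [] \<longrightarrow> hd W = a")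
  case True
  then have "W = concat (replicate K [a, b])" using alternating_eq_concat_replicate[OF ab(3) W] by simp
  moreover have "relator n m (concat (replicate K [a, b]))" by (rule relator.braid) (use ab K in auto)
  ultimately show ?thesis using coxeq_relator_Nil by simp
next
  case False
  then have "W \<noteq> []" "hd W = b" using W(1) hd_in_set by fastforce+
  then have "W = concat (replicate K [b, a])"
    using alternating_eq_concat_replicate[OF ab(3)[symmetric], of W K] W by auto
  moreover have "relator n m (concat (replicate K [b, a]))"
    by (rule relator.braid) (use ab K m_sym in auto)
  ultimately show ?thesis using coxeq_relator_Nil by simp
qed

lemma coxeq_alternating_swap:
  assumes ab: "a < n" "b < n" "a \<noteq> b" and K: "m a b = enat K"
    and u: "set u \<subseteq> {a, b}" "successively (\<noteq>) u" "length u = K" "u \<noteq> []" "last u = b"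
  shows "ceq u (map (\<lambda>x. if x = a then b else a) u)"
proof -
  define u' where "u' = map (\<lambda>x. if x = a then b else a) u"
  have "successively (\<noteq>) u'"
    unfolding u'_def successively_map using u(1) ab(3)
    by (intro successively_mono[OF u(2)]) auto
  then have "successively (\<noteq>) (rev u')"
    unfolding successively_rev by (rule successively_mono) auto
  then have "successively (\<noteq>) (u @ rev u')"
    using u(2,5) ab(3) unfolding successively_append_iff by (simp add: hd_rev u'_def last_map u(4))
  moreover have "set (u @ rev u') \<subseteq> {a, b}" "length (u @ rev u') = 2 * K"
    using u(1,3) by (auto simp: u'_def)
  ultimately have W: "ceq (u @ rev u') []" using coxeq_alternating_Nil[OF ab K] by blast
  have u'set: "set u' \<subseteq> {..<n}" using ab by (auto simp: u'_def)
  have "ceq (u @ rev u' @ u') u"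
    using coxeq_context[OF conjunct2[OF coxeq_rev_cancel[OF u'set]], of u "[]"] by simp
  moreover have "ceq (u @ rev u' @ u') u'" using coxeq_context[OF W, of "[]" u'] by simp
  ultimately show ?thesis unfolding u'_def[symmetric] by (meson coxeq.sym coxeq.trans)
qed

lemma dihedral_word_last:
  assumes u: "set u \<subseteq> {s, s'}" "u \<noteq> []"
    and no_descent: "\<And>u'. ceq (u' @ [s]) u \<Longrightarrow> length u' + 1 \<noteq> length u"
  shows "last u = s'"
proof -
  have "last u \<noteq> s"
  proof
    assume "last u = s"
    then have "butlast u @ [s] = u" using u(2) by (metis append_butlast_last_id)
    then have "ceq (butlast u @ [s]) u" by (simp add: coxeq.refl)
    then show False using no_descent u(2) by fastforce
  qed
  then show ?thesis using u last_in_set by blast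
qed

text \<open>A reduced word in \<open>s, s'\<close> that has no reduced expression ending in \<open>s\<close> is shorter than
  \<open>m(s, s')\<close>: otherwise a braid relation would turn its last \<open>m(s, s')\<close> letters around.\<close>

lemma dihedral_word_length:
  assumes ab: "s < n" "s' < n" "s \<noteq> s'"
    and u: "set u \<subseteq> {s, s'}" "successively (\<noteq>) u" "u \<noteq> [] \<longrightarrow> last u = s'"
    and no_descent: "\<And>u'. ceq (u' @ [s]) u \<Longrightarrow> length u' + 1 \<noteq> length u"
  shows "enat (Suc (length u)) \<le> m s s'"
proof (cases "m s s'")
  case (enat K)
  show ?thesis
  proof (rule ccontr)
    assume "\<not> ?thesis"
    then have Ku: "K \<le> length u" using enat by simp
    have K2: "2 \<le> K" using m_ge_2[OF ab] enat by (simp add: numeral_eq_enat)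
    define u1 where "u1 = take (length u - K) u"
    define u2 where "u2 = drop (length u - K) u"
    have uu: "u = u1 @ u2" by (simp add: u1_def u2_def)
    have l2: "length u2 = K" using Ku by (simp add: u2_def)
    have u2ne: "u2 \<noteq> []" using l2 K2 by auto
    have u2p: "set u2 \<subseteq> {s, s'}" "successively (\<noteq>) u2" "last u2 = s'"
      using u uu u2ne by (auto simp: successively_append_iff)
    define sw where "sw = (\<lambda>x. if x = s then s' else s)"
    have "ceq u2 (map sw u2)"
      using coxeq_alternating_swap[OF ab enat u2p(1,2) l2 u2ne u2p(3)] by (simp add: sw_def)
    then have cu: "ceq u (u1 @ map sw u2)" using uu coxeq_append[OF coxeq.refl] by simp
    have "last (map sw u2) = s" using u2p(3) u2ne ab(3) by (simp add: last_map sw_def)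
    then have "u1 @ map sw u2 = (u1 @ butlast (map sw u2)) @ [s]"
      using u2ne by (metis append_assoc append_butlast_last_id list.map_disc_iff)
    then have "ceq ((u1 @ butlast (map sw u2)) @ [s]) u" using coxeq.sym[OF cu] by simp
    moreover have "length (u1 @ butlast (map sw u2)) + 1 = length u" using uu u2ne by simp
    ultimately show False using no_descent by blast
  qed
qed simp

text \<open>Factor \<open>w = v u\<close> with \<open>u\<close> in the parabolic subgroup generated by \<open>s, s'\<close>, lengths adding up,
  and \<open>\<ell>(v)\<close> minimal; minimality makes \<open>s\<close> and \<open>s'\<close> ascents of \<open>v\<close>.\<close>

lemma minimal_dihedral_factorization:
  assumes w: "set w \<subseteq> {..<n}" and s: "s < n" "s' < n"
    and ps: "ceq (p @ [s']) w" "length p + 1 = word_length w"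
  obtains v u where "set v \<subseteq> {..<n}" "set u \<subseteq> {s, s'}" "ceq (v @ u) w"
    "word_length v + length u = word_length w" "word_length v < word_length w"
    "word_length v < word_length (v @ [s])" "word_length v < word_length (v @ [s'])"
proof -
  have pset: "set p \<subseteq> {..<n}" using coxeq_set_iff[OF ps(1)] w by simp
  have ellp: "word_length p + 1 = word_length w"
    using word_length_cong[OF ps(1)] word_length_append_le[of p "[s']"] word_length_le_length[of p] ps(2)
    by simp
  define Ap where "Ap = (\<lambda>(v, u). set v \<subseteq> {..<n} \<and> set u \<subseteq> {s, s'} \<and> ceq (v @ u) w
     \<and> word_length v + length u = word_length w)"
  have "Ap (p, [s'])" using pset ps ellp by (simp add: Ap_def)
  then obtain vu where Avu: "Ap vu" and minvu: "\<forall>y. Ap y \<longrightarrow> word_length (fst vu) \<le> word_length (fst y)"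
    using ex_has_least_nat[of Ap "(p, [s'])" "\<lambda>x. word_length (fst x)"] by blast
  obtain v u where vu: "vu = (v, u)" by fastforce
  have vset: "set v \<subseteq> {..<n}" and uset: "set u \<subseteq> {s, s'}" and vuw: "ceq (v @ u) w"
    and len: "word_length v + length u = word_length w" using Avu vu by (auto simp: Ap_def)
  have minv: "\<And>v' u'. Ap (v', u') \<Longrightarrow> word_length v \<le> word_length v'" using minvu vu by fastforce
  have "word_length v < word_length w" using minv[OF \<open>Ap (p, [s'])\<close>] ellp by simp
  moreover have "word_length v < word_length (v @ [t])" if t: "t \<in> {s, s'}" for t
  proof (rule ccontr)
    assume "\<not> word_length v < word_length (v @ [t])"
    then have "word_length (v @ [t]) < word_length v" using word_length_snoc_neq[of v t] by simp
    moreover have tn: "t < n" using t s by auto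
    ultimately have e1: "word_length (v @ [t]) + 1 = word_length v" using word_length_le_snoc[of t v] by simp
    have "ceq ((v @ [t]) @ (t # u)) (v @ u)" using coxeq_cancel[OF tn, of v u] by simp
    then have "Ap (v @ [t], t # u)"
      using vset tn t uset e1 len coxeq.trans[OF _ vuw] by (auto simp: Ap_def)
    then show False using minv[of "v @ [t]" "t # u"] e1 by simp
  qed
  ultimately show thesis using that vset uset vuw len by blast
qed

lemma reduced_word_of_length_additive:
  assumes "ceq (v @ u) w" "word_length v + length u = word_length w"
  shows "reduced_word n m u"
  unfolding reduced_word_def
proof (intro allI impI)
  fix u' assume "ceq u' u"
  then have "ceq (v @ u') w" using coxeq.trans[OF coxeq_append[OF coxeq.refl] assms(1)] by blast
  then have "word_length w = word_length (v @ u')" by (simp add: word_length_cong)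
  then show "length u \<le> length u'" using word_length_append_le[of v u'] assms(2) by simp
qed

lemma no_descent_of_length_additive:
  assumes s: "s < n" and vu: "ceq (v @ u) w" "word_length v + length u = word_length w"
    and asc: "word_length w < word_length (w @ [s])" and u': "ceq (u' @ [s]) u"
  shows "length u' + 1 \<noteq> length u"
proof
  assume len': "length u' + 1 = length u"
  have "ceq (w @ [s]) ((v @ u) @ [s])" by (rule coxeq_append[OF coxeq.sym[OF vu(1)] coxeq.refl])
  moreover have "ceq ((v @ u) @ [s]) ((v @ u') @ [s, s] @ [])"
    using coxeq_append[OF coxeq_append[OF coxeq.refl coxeq.sym[OF u']] coxeq.refl, of v "[s]"]
    by simp
  moreover have "ceq ((v @ u') @ [s, s] @ []) (v @ u')" using coxeq_cancel[OF s, of "v @ u'" "[]"] by simp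
  ultimately have "ceq (w @ [s]) (v @ u')" by (blast intro: coxeq.trans)
  then have "word_length (w @ [s]) \<le> word_length v + length u'"
    using word_length_cong word_length_append_le[of v u'] by metis
  then show False using asc vu(2) len' by simp
qed

theorem act_simple_root_pos:
  "set w \<subseteq> {..<n} \<Longrightarrow> s < n \<Longrightarrow> word_length w < word_length (w @ [s]) \<Longrightarrow> pos_vec (\<rho> w (\<alpha> s))"
proof (induction "word_length w" arbitrary: w s rule: less_induct)
  case less
  note wset = less.prems(1) and sn = less.prems(2) and lt = less.prems(3)
  show ?case
  proof (cases "word_length w = 0")
    case True
    then have "\<rho> w = \<rho> []" using act_coxeq coxeq.sym coxeq_Nil_of_word_length_0 by metis
    then show ?thesis by (auto simp: pos_vec_def simple_root_def)
  next
    case False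
    obtain w0 where w0: "ceq w0 w" "length w0 = word_length w" using word_length_obtain by blast
    have "w0 \<noteq> []" using w0 False by auto
    then obtain p s' where ps: "w0 = p @ [s']" by (metis rev_exhaust)
    have s'n: "s' < n" using coxeq_set_iff[OF w0(1)] wset ps by auto
    have lp: "length p + 1 = word_length w" using w0 ps by simp
    have ss: "s \<noteq> s'"
    proof
      assume "s = s'"
      then have "ceq (w @ [s]) (p @ [s, s] @ [])"
        using coxeq_append[OF coxeq.sym[OF w0(1)] coxeq.refl, of "[s]"] ps by simp
      then have "ceq (w @ [s]) p" using coxeq_cancel[OF sn, of p "[]"] by (auto intro: coxeq.trans)
      then have "word_length (w @ [s]) \<le> length p"
        using word_length_cong[of "w @ [s]" p] word_length_le_length[of p] by simp
      then show False using lt lp by simp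
    qed
    have "ceq (p @ [s']) w" using w0(1) ps by simp
    then obtain v u where vset: "set v \<subseteq> {..<n}" and uset: "set u \<subseteq> {s, s'}" and vuw: "ceq (v @ u) w"
      and len: "word_length v + length u = word_length w" and shorter: "word_length v < word_length w"
      and asc: "word_length v < word_length (v @ [s])" "word_length v < word_length (v @ [s'])"
      by (rule minimal_dihedral_factorization[OF wset sn s'n _ lp])
    have "set u \<subseteq> {..<n}" using uset sn s'n by auto
    then have succ: "successively (\<noteq>) u"
      using reduced_word_successively reduced_word_of_length_additive[OF vuw len] by blast
    have no_descent: "length u' + 1 \<noteq> length u" if "ceq (u' @ [s]) u" for u'
      by (rule no_descent_of_length_additive[OF sn vuw len lt that])
    have last: "u \<noteq> [] \<longrightarrow> last u = s'" using dihedral_word_last[OF uset _ no_descent] by blast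
    have shape: "enat (Suc (length u)) \<le> m s s'"
      by (rule dihedral_word_length[OF sn s'n ss uset succ last no_descent])
    obtain p q where pq: "0 \<le> p" "0 \<le> q" "\<rho> u (\<alpha> s) = (\<lambda>k. p * \<alpha> s k + q * \<alpha> s' k)"
      by (rule act_dihedral_simple_root_nonneg[OF sn s'n ss uset succ last shape])
    have "\<rho> w (\<alpha> s) = \<rho> v (\<rho> u (\<alpha> s))"
      using fun_cong[OF act_coxeq[OF vuw], of "\<alpha> s"] by (simp add: act_append)
    also have "\<dots> = (\<lambda>k. p * \<rho> v (\<alpha> s) k + q * \<rho> v (\<alpha> s') k)" by (simp only: pq(3) act_linear)
    finally have w: "\<rho> w (\<alpha> s) = \<dots>" .
    have "pos_vec (\<rho> v (\<alpha> s))" "pos_vec (\<rho> v (\<alpha> s'))"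
      using less.hyps[OF shorter vset] sn s'n asc by auto
    then show ?thesis using pq(1,2) unfolding w by (simp add: pos_vec_def)
  qed
qed

lemma act_uminus: "\<rho> w (\<lambda>k. - x k) = (\<lambda>k. - \<rho> w x k)"
proof -
  have "(\<lambda>k. - x k) = (\<lambda>k. (-1) * x k + 0 * x k)" by simp
  then show ?thesis using act_linear[of w "-1" x 0 x] by simp
qed

lemma act_snoc_simple_root_self: "s < n \<Longrightarrow> \<rho> (w @ [s]) (\<alpha> s) = (\<lambda>k. - \<rho> w (\<alpha> s) k)"
  by (simp add: act_append sref_simple_root_self act_uminus)

lemma act_simple_root_pos_or_neg:
  assumes w: "set w \<subseteq> {..<n}" and s: "s < n"
  shows "pos_vec (\<rho> w (\<alpha> s)) \<or> neg_vec (\<rho> w (\<alpha> s))"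
proof (cases "word_length w < word_length (w @ [s])")
  case True
  then show ?thesis using act_simple_root_pos[OF w s] by simp
next
  case False
  then have lt: "word_length (w @ [s]) < word_length w" using word_length_snoc_neq[of w s] by simp
  have "ceq ((w @ [s]) @ [s]) w" using coxeq_cancel[OF s, of w "[]"] by simp
  then have "word_length ((w @ [s]) @ [s]) = word_length w" by (rule word_length_cong)
  then have "word_length (w @ [s]) < word_length ((w @ [s]) @ [s])" using lt by simp
  then have "pos_vec (\<rho> (w @ [s]) (\<alpha> s))" using act_simple_root_pos[OF _ s] w s by simp
  then show ?thesis using act_snoc_simple_root_self[OF s, of w] by (auto simp: pos_vec_def neg_vec_def)
qed

section \<open>Faithfulness and the roots of reflections\<close>

text \<open>A word acting trivially is a product of relators: its last letter \<open>s\<close> would otherwise be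
  a descent, so \<open>z = p s\<close> would map \<open>\<alpha>\<^sub>s\<close> to the negative root \<open>-p \<alpha>\<^sub>s\<close>.\<close>

lemma coxeq_Nil_of_act_id:
  assumes zset: "set z \<subseteq> {..<n}" and zid: "\<rho> z = (\<lambda>x. x)"
  shows "ceq z []"
proof (rule ccontr)
  assume nz: "\<not> ceq z []"
  obtain z0 where z0: "ceq z0 z" "length z0 = word_length z" using word_length_obtain by blast
  have "z0 \<noteq> []" using z0(1) nz coxeq.sym by blast
  then obtain p s where ps: "z0 = p @ [s]" by (metis rev_exhaust)
  have s: "s < n" and pset: "set p \<subseteq> {..<n}" using coxeq_set_iff[OF z0(1)] zset ps by auto
  have "word_length (p @ [s]) = length p + 1" using word_length_cong[OF z0(1)] z0(2) ps by simp
  then have "word_length p < word_length (p @ [s])" using word_length_le_length[of p] by simp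
  then have pos: "pos_vec (\<rho> p (\<alpha> s))" using act_simple_root_pos[OF pset s] by simp
  have "\<rho> z0 (\<alpha> s) = \<alpha> s" using act_coxeq[OF z0(1)] zid by simp
  then have "- \<rho> p (\<alpha> s) s = 1" using act_snoc_simple_root_self[OF s, of p] ps by (metis simple_root_same)
  then show False using pos s by (auto simp: pos_vec_def)
qed

lemma coxeq_of_act_eq:
  assumes u: "set u \<subseteq> {..<n}" and v: "set v \<subseteq> {..<n}" and eq: "\<rho> u = \<rho> v"
  shows "ceq u v"
proof -
  have "\<rho> (u @ rev v) = (\<lambda>x. x)" using eq act_rev_cancel[OF v] by (simp add: fun_eq_iff act_append)
  then have "ceq (u @ rev v) []" using u v by (intro coxeq_Nil_of_act_id) auto
  then have "ceq ((u @ rev v) @ v) v" using coxeq_append[OF _ coxeq.refl] by fastforce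
  moreover have "ceq (u @ (rev v @ v)) u"
    using coxeq_append[OF coxeq.refl conjunct2[OF coxeq_rev_cancel[OF v]], of u] by simp
  ultimately show ?thesis by (metis append_assoc coxeq.sym coxeq.trans)
qed

lemma Bform_root_root: "set w \<subseteq> {..<n} \<Longrightarrow> k < n \<Longrightarrow> B (\<rho> w (\<alpha> k)) (\<rho> w (\<alpha> k)) = 2"
  using Bform_act[of w "\<alpha> k" "\<alpha> k"] by (simp add: Bform_simple_roots)

lemma act_reflection_word:
  assumes w: "set w \<subseteq> {..<n}" and k: "k < n"
  shows "\<rho> (w @ [k] @ rev w) x = (\<lambda>i. x i - B x (\<rho> w (\<alpha> k)) * \<rho> w (\<alpha> k) i)"
proof -
  define y where "y = \<rho> (rev w) x"
  have "\<rho> (w @ [k] @ rev w) x = \<rho> w (\<sigma> k y)" by (simp add: act_append y_def)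
  also have "\<sigma> k y = (\<lambda>i. 1 * y i + (- B y (\<alpha> k)) * \<alpha> k i)" by (rule sref_eq_combination)
  also have "\<rho> w \<dots> = (\<lambda>i. 1 * \<rho> w y i + (- B y (\<alpha> k)) * \<rho> w (\<alpha> k) i)" by (rule act_linear)
  also have "\<rho> w y = x" unfolding y_def by (rule act_rev_cancel[OF w])
  also have "B y (\<alpha> k) = B x (\<rho> w (\<alpha> k))"
    using Bform_act[OF w, of y "\<alpha> k"] \<open>\<rho> w y = x\<close> by simp
  finally show ?thesis by simp
qed

lemma Bform_zero_left: "(\<forall>i<n. v i = 0) \<Longrightarrow> B v u = 0"
  by (simp add: Bform_eq_bilin bilin_zero_left)

lemma pos_root_unique:
  assumes w: "set w \<subseteq> {..<n}" "k < n" and w': "set w' \<subseteq> {..<n}" "k' < n"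
    and eq: "ceq (w' @ [k'] @ rev w') (w @ [k] @ rev w)"
    and p: "pos_vec (\<rho> w (\<alpha> k))" "pos_vec (\<rho> w' (\<alpha> k'))"
  shows "\<rho> w' (\<alpha> k') = \<rho> w (\<alpha> k)"
proof -
  define r where "r = \<rho> w (\<alpha> k)"
  define b where "b = \<rho> w' (\<alpha> k')"
  have Br: "B r r = 2" using Bform_root_root[OF w] by (simp add: r_def)
  have Bb: "B b b = 2" using Bform_root_root[OF w'] by (simp add: b_def)
  have "\<rho> (w' @ [k'] @ rev w') = \<rho> (w @ [k] @ rev w)" by (rule act_coxeq[OF eq])
  then have E: "\<And>x. (\<lambda>i. x i - B x b * b i) = (\<lambda>i. x i - B x r * r i)"
    using act_reflection_word[OF w] act_reflection_word[OF w'] by (simp add: r_def b_def)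
  have E2: "B x b * b i = B x r * r i" for x i
    using fun_cong[OF E[of x], of i] by simp
  define l where "l = B r b / 2"
  have rl: "r i = l * b i" for i using E2[of r i] Br by (simp add: l_def)
  have Bsym: "B b r = B r b" by (rule Bform_sym)
  have bl: "2 * b i = 2 * (l * l) * b i" for i
    using E2[of b i] Bb rl[of i] Bsym by (simp add: l_def algebra_simps)
  obtain i where i: "i < n" "b i \<noteq> 0"
  proof (rule ccontr)
    assume "\<not> thesis"
    then have "\<forall>i<n. b i = 0" using that by blast
    then show False using Bform_zero_left[of b b] Bb by simp
  qed
  have ll: "l * l = 1" using bl[of i] i by simp
  have "l = 1"
  proof (rule ccontr)
    assume "l \<noteq> 1"
    then have "l = -1" using ll by (metis mult_cancel_left1 square_eq_1_iff)
    then have "\<forall>j<n. r j = 0" using p rl unfolding pos_vec_def r_def b_def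
      by (metis add.inverse_neutral mult_minus1 neg_0_le_iff_le order_antisym)
    then show False using Bform_zero_left[of r r] Br by simp
  qed
  then show ?thesis using rl by (auto simp: r_def b_def)
qed

definition prefix_root :: "nat list \<Rightarrow> nat \<Rightarrow> nat \<Rightarrow> real" where
  "prefix_root xs i = \<rho> (take i xs) (\<alpha> (xs ! i))"

lemma prefix_root_Cons_0: "prefix_root (x # xs) 0 = \<alpha> x"
  by (simp add: prefix_root_def)

lemma prefix_root_Cons_Suc: "prefix_root (x # xs) (Suc k) = \<sigma> x (prefix_root xs k)"
  by (simp add: prefix_root_def)

lemma reduced_prefix_root_pos:
  assumes red: "reduced_word n m xs" and xs: "set xs \<subseteq> {..<n}" and i: "i < length xs"
  shows "pos_vec (prefix_root xs i)"
proof -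
  define w where "w = take i xs"
  define k where "k = xs ! i"
  have wset: "set w \<subseteq> {..<n}" using xs by (auto simp: w_def dest: in_set_takeD)
  have kn: "k < n" using xs nth_mem[OF i] by (auto simp: k_def)
  have "word_length xs = length xs" by (rule word_length_reduced[OF red])
  moreover have "xs = take (Suc i) xs @ drop (Suc i) xs" by simp
  ultimately have "word_length (take (Suc i) xs) = length (take (Suc i) xs)"
    using word_length_append_eq_length[of "take (Suc i) xs" "drop (Suc i) xs"] by simp
  moreover have "take (Suc i) xs = w @ [k]" using i by (simp add: w_def k_def take_Suc_conv_app_nth)
  ultimately have ewk: "word_length (w @ [k]) = length w + 1" by simp
  then have "word_length w = length w" using word_length_append_eq_length[of w "[k]"] by simp
  then have "word_length w < word_length (w @ [k])" using ewk by simp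
  then show ?thesis using act_simple_root_pos[OF wset kn] by (simp add: prefix_root_def w_def k_def)
qed

lemma root_of_refl_word:
  assumes red: "reduced_word n m xs" and xs: "set xs \<subseteq> {..<n}" and i: "i < length xs"
  shows "root_of n m (refl_word xs i) = prefix_root xs i"
proof -
  define w where "w = take i xs"
  define k where "k = xs ! i"
  have wset: "set w \<subseteq> {..<n}" using xs by (auto simp: w_def dest: in_set_takeD)
  have kn: "k < n" using xs nth_mem[OF i] by (auto simp: k_def)
  have pos: "pos_vec (\<rho> w (\<alpha> k))"
    using reduced_prefix_root_pos[OF assms] by (simp add: prefix_root_def w_def k_def)
  have "root_of n m (refl_word xs i) = \<rho> w (\<alpha> k)"
    unfolding root_of_def
  proof (rule the_equality)
    show "(\<forall>i<n. 0 \<le> \<rho> w (\<alpha> k) i) \<and> (\<exists>w' k'. k' < n \<and> set w' \<subseteq> {..<n} \<and>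
        \<rho> w (\<alpha> k) = \<rho> w' (\<alpha> k') \<and> ceq (w' @ [k'] @ rev w') (refl_word xs i))"
      using pos wset kn by (auto simp: pos_vec_def refl_word_def w_def k_def intro!: coxeq.refl)
  next
    fix \<beta> assume h: "(\<forall>i<n. 0 \<le> \<beta> i) \<and> (\<exists>w' k'. k' < n \<and> set w' \<subseteq> {..<n} \<and>
        \<beta> = \<rho> w' (\<alpha> k') \<and> ceq (w' @ [k'] @ rev w') (refl_word xs i))"
    then obtain w' k' where h2: "k' < n" "set w' \<subseteq> {..<n}" "\<beta> = \<rho> w' (\<alpha> k')"
      "ceq (w' @ [k'] @ rev w') (w @ [k] @ rev w)" by (auto simp: refl_word_def w_def k_def)
    have "pos_vec (\<rho> w' (\<alpha> k'))" using h h2(3) by (simp add: pos_vec_def)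
    then show "\<beta> = \<rho> w (\<alpha> k)" using pos_root_unique[OF wset kn h2(2,1) h2(4) pos] h2(3) by simp
  qed
  then show ?thesis by (simp add: prefix_root_def w_def k_def)
qed

lemma reflection_words_commute:
  assumes w: "set w \<subseteq> {..<n}" "k < n" and w': "set w' \<subseteq> {..<n}" "k' < n"
    and orth: "B (\<rho> w (\<alpha> k)) (\<rho> w' (\<alpha> k')) = 0"
  shows "ceq ((w @ [k] @ rev w) @ (w' @ [k'] @ rev w')) ((w' @ [k'] @ rev w') @ (w @ [k] @ rev w))"
proof (rule coxeq_of_act_eq)
  show "set ((w @ [k] @ rev w) @ (w' @ [k'] @ rev w')) \<subseteq> {..<n}" using w w' by auto
  show "set ((w' @ [k'] @ rev w') @ (w @ [k] @ rev w)) \<subseteq> {..<n}" using w w' by auto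
  define r where "r = \<rho> w (\<alpha> k)"
  define b where "b = \<rho> w' (\<alpha> k')"
  have o1: "B r b = 0" and o2: "B b r = 0" using orth Bform_sym by (auto simp: r_def b_def)
  show "\<rho> ((w @ [k] @ rev w) @ (w' @ [k'] @ rev w')) = \<rho> ((w' @ [k'] @ rev w') @ (w @ [k] @ rev w))"
  proof (rule ext)
    fix x
    have lin: "B (\<lambda>i. x i - B x c * c i) d = B x d - B x c * B c d" for c d
      using Bform_linear_left[of 1 x "- B x c" c d] by simp
    show "\<rho> ((w @ [k] @ rev w) @ (w' @ [k'] @ rev w')) x = \<rho> ((w' @ [k'] @ rev w') @ (w @ [k] @ rev w)) x"
      unfolding act_append[of "w @ [k] @ rev w"] act_append[of "w' @ [k'] @ rev w'"]
      unfolding act_reflection_word[OF w] act_reflection_word[OF w'] r_def[symmetric] b_def[symmetric]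
      by (simp add: lin o1 o2) (simp add: algebra_simps)
  qed
qed

lemma refl_words_commute:
  assumes xs: "set xs \<subseteq> {..<n}" and ij: "i < length xs" "j < length xs"
    and orth: "B (prefix_root xs i) (prefix_root xs j) = 0"
  shows "ceq (refl_word xs i @ refl_word xs j) (refl_word xs j @ refl_word xs i)"
proof -
  have "set (take k xs) \<subseteq> {..<n}" "xs ! k < n" if "k < length xs" for k
    using xs nth_mem[OF that] by (auto dest: in_set_takeD)
  then show ?thesis
    using reflection_words_commute[of "take i xs" "xs ! i" "take j xs" "xs ! j"] ij orth
    by (simp add: refl_word_def prefix_root_def)
qed

section \<open>The form \<open>\<omega>\<^sub>c\<close> depends only on \<open>c\<close>\<close>

lemma sref_commute:
  assumes "a < n" "x < n" "Bmat m a x = 0"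
  shows "\<sigma> a (\<sigma> x v) = \<sigma> x (\<sigma> a v)"
proof -
  have ax: "B (\<alpha> x) (\<alpha> a) = 0" "B (\<alpha> a) (\<alpha> x) = 0" using assms Bmat_sym by (auto simp: Bform_simple_roots)
  have 1: "\<sigma> a (\<alpha> x) = \<alpha> x" "\<sigma> x (\<alpha> a) = \<alpha> a" using ax by (auto intro: sref_fix)
  have L: "\<sigma> a (\<sigma> x v) = (\<lambda>k. 1 * \<sigma> a v k + (- B v (\<alpha> x)) * \<sigma> a (\<alpha> x) k)"
    by (subst sref_eq_combination[of x], rule sref_linear)
  have R: "\<sigma> x (\<sigma> a v) = (\<lambda>k. 1 * \<sigma> a v k + (- B (\<sigma> a v) (\<alpha> x)) * \<alpha> x k)"
    by (rule sref_eq_combination)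
  have "B (\<sigma> a v) (\<alpha> x) = B v (\<alpha> x)"
    using Bform_linear_left[of 1 v "- B v (\<alpha> a)" "\<alpha> a" "\<alpha> x"] ax by (simp add: sref_def)
  then show ?thesis unfolding L R 1 by simp
qed

lemma act_move_commuting:
  assumes "x < n" "set p \<subseteq> {..<n}" "\<forall>a\<in>set p. Bmat m a x = 0"
  shows "\<rho> (p @ [x]) v = \<rho> (x # p) v"
  using assms
proof (induction p arbitrary: v)
  case (Cons a p)
  have "a < n" "Bmat m a x = 0" using Cons.prems by auto
  then have "\<sigma> a (\<sigma> x (\<rho> p v)) = \<sigma> x (\<sigma> a (\<rho> p v))" using sref_commute Cons.prems(1) by blast
  then show ?case using Cons by (simp add: act_append)
qed simp

lemma act_rev_eq: "set y \<subseteq> {..<n} \<Longrightarrow> set y' \<subseteq> {..<n} \<Longrightarrow> \<rho> y = \<rho> y' \<Longrightarrow> \<rho> (rev y) = \<rho> (rev y')"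
proof (rule ext)
  fix v assume h: "set y \<subseteq> {..<n}" "set y' \<subseteq> {..<n}" "\<rho> y = \<rho> y'"
  have "\<rho> (rev y) v = \<rho> (rev y) (\<rho> y' (\<rho> (rev y') v))" using act_rev_cancel[OF h(2)] by simp
  also have "\<dots> = \<rho> (rev y) (\<rho> y (\<rho> (rev y') v))" using h(3) by simp
  also have "\<dots> = \<rho> (rev y') v" using act_rev_cancel'[OF h(1)] by simp
  finally show "\<rho> (rev y) v = \<rho> (rev y') v" .
qed

lemma act_rev_Cons_simple_root_coord: "x \<notin> set z \<Longrightarrow> x < n \<Longrightarrow> \<rho> (rev (x # z)) (\<alpha> x) x = -1"
  by (simp add: act_append sref_simple_root_self act_uminus act_coord_notin)

lemma act_rev_simple_root_pos_coord:
  assumes yd: "distinct (p @ x # q)" and ys: "set (p @ x # q) \<subseteq> {..<n}"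
    and a: "a \<in> set p" and nc: "Bmat m x a \<noteq> 0"
  shows "0 < \<rho> (rev (p @ x # q)) (\<alpha> x) a"
proof -
  obtain p1 p2 where p: "p = p1 @ a # p2" using a by (metis split_list)
  have xn: "x < n" and an: "a < n" using ys a by auto
  have ax: "a \<noteq> x" "a \<notin> set p1" "a \<notin> set p2" "a \<notin> set q" "x \<notin> set p1"
    using yd p by auto
  define eps where "eps = \<rho> (rev p1) (\<alpha> x)"
  have p1s: "set (rev p1) \<subseteq> {..<n}" using ys p by auto
  have epsx: "eps x = 1" using ax by (simp add: eps_def act_coord_notin)
  have epsa: "eps a = 0" using ax by (simp add: eps_def act_coord_notin)
  have "pos_vec eps \<or> neg_vec eps" unfolding eps_def by (rule act_simple_root_pos_or_neg[OF p1s xn])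
  then have epos: "pos_vec eps" using epsx xn by (auto simp: neg_vec_def)
  have "B eps (\<alpha> a) = (\<Sum>i<n. eps i * Bmat m i a)" by (rule Bform_simple_root_right[OF an])
  also have "\<dots> = eps x * Bmat m x a + (\<Sum>i\<in>{..<n} - {x}. eps i * Bmat m i a)"
    using xn by (simp add: sum.remove)
  also have "(\<Sum>i\<in>{..<n} - {x}. eps i * Bmat m i a) \<le> 0"
  proof (rule sum_nonpos)
    fix i assume i: "i \<in> {..<n} - {x}"
    show "eps i * Bmat m i a \<le> 0"
    proof (cases "i = a")
      case True then show ?thesis using epsa by simp
    next
      case False
      then show ?thesis using epos i Bmat_nonpos[of i a] an
        by (auto simp: pos_vec_def mult_nonneg_nonpos)
    qed
  qed
  moreover have "Bmat m x a < 0" using Bmat_nonpos[OF xn an ax(1)[symmetric]] nc by simp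
  ultimately have Bneg: "B eps (\<alpha> a) < 0" using epsx by simp
  have "\<rho> (rev (p @ x # q)) (\<alpha> x) = \<rho> (rev q) (\<sigma> x (\<rho> (rev p2) (\<sigma> a eps)))"
    by (simp add: p act_append eps_def)
  then have "\<rho> (rev (p @ x # q)) (\<alpha> x) a = \<sigma> a eps a"
    using ax by (simp add: act_coord_notin sref_other_coord)
  also have "\<dots> = - B eps (\<alpha> a)" using epsa by (simp add: sref_def)
  finally show ?thesis using Bneg by simp
qed

lemma act_Cons_cancel: "x < n \<Longrightarrow> \<rho> (x # u) = \<rho> (x # v) \<Longrightarrow> \<rho> u = \<rho> v"
  by (metis act_Cons sref_sref ext)

text \<open>\<open>y\<^sup>-\<^sup>1 \<alpha>\<^sub>x\<close> has coordinate \<open>-1\<close> at \<open>x\<close>, so it is negative; this locates \<open>x\<close> in \<open>y\<close> and,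
  since a letter before \<open>x\<close> not commuting with it would give a positive coordinate, lets \<open>x\<close> be
  moved to the front.\<close>

lemma act_eq_Cons_split:
  assumes y: "distinct y" "set y \<subseteq> {..<n}" and xz: "distinct (x # z)" "set (x # z) \<subseteq> {..<n}"
    and eq: "\<rho> y = \<rho> (x # z)"
  obtains p q where "y = p @ x # q" "\<forall>a\<in>set p. Bmat m a x = 0" "\<rho> (p @ q) = \<rho> z"
proof -
  have xn: "x < n" using xz by auto
  have revs: "\<rho> (rev y) = \<rho> (rev (x # z))" by (rule act_rev_eq) (use y xz eq in auto)
  have gx: "\<rho> (rev (x # z)) (\<alpha> x) x = -1" using act_rev_Cons_simple_root_coord xz by auto
  have "x \<in> set y"
  proof (rule ccontr)
    assume "x \<notin> set y"
    then have "\<rho> (rev y) (\<alpha> x) x = 1" by (simp add: act_coord_notin)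
    then show False using gx revs by simp
  qed
  then obtain p q where yx: "y = p @ x # q" by (metis split_list)
  have pn: "set p \<subseteq> {..<n}" "set q \<subseteq> {..<n}" using y yx by auto
  have comm: "\<forall>a\<in>set p. Bmat m a x = 0"
  proof (rule ccontr)
    assume "\<not> ?thesis"
    then obtain a where a: "a \<in> set p" "Bmat m a x \<noteq> 0" by blast
    then have "Bmat m x a \<noteq> 0" using Bmat_sym[of a x] pn xn by auto
    then have "0 < \<rho> (rev (p @ x # q)) (\<alpha> x) a"
      using act_rev_simple_root_pos_coord[OF _ _ a(1)] y yx by auto
    moreover have "a < n" using a pn by auto
    moreover have "pos_vec (\<rho> (rev y) (\<alpha> x)) \<or> neg_vec (\<rho> (rev y) (\<alpha> x))"
      by (rule act_simple_root_pos_or_neg) (use y xn in auto)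
    ultimately show False using gx revs xn yx by (auto simp: pos_vec_def neg_vec_def)
  qed
  have "\<rho> y = \<rho> (x # (p @ q))"
  proof (rule ext)
    fix v
    have "\<rho> y v = \<rho> (p @ [x]) (\<rho> q v)" by (simp add: yx act_append)
    also have "\<dots> = \<rho> (x # p) (\<rho> q v)" by (rule act_move_commuting[OF xn pn(1) comm])
    finally show "\<rho> y v = \<rho> (x # (p @ q)) v" by (simp add: act_append)
  qed
  then have "\<rho> (p @ q) = \<rho> z" using act_Cons_cancel[OF xn] eq by metis
  then show thesis using that yx comm by blast
qed

lemma coxeter_word_orientation:
  "distinct y' \<Longrightarrow> set y' \<subseteq> {..<n} \<Longrightarrow> distinct y \<Longrightarrow> set y \<subseteq> {..<n} \<Longrightarrow> \<rho> y = \<rho> y' \<Longrightarrow>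
   set y = set y' \<and> (\<forall>a b. Bmat m a b \<noteq> 0 \<longrightarrow> before y a b \<longrightarrow> before y' a b)"
proof (induction y' arbitrary: y)
  case Nil
  show ?case
  proof (cases y)
    case Nil then show ?thesis by (simp add: before_def)
  next
    case (Cons x z)
    have "\<rho> (rev y) = \<rho> (rev [])" by (rule act_rev_eq) (use Nil.prems in auto)
    then have "\<rho> (rev y) (\<alpha> x) x = 1" by simp
    moreover have "\<rho> (rev y) (\<alpha> x) x = -1"
      using act_rev_Cons_simple_root_coord[of x z] Nil.prems Cons by auto
    ultimately show ?thesis by simp
  qed
next
  case (Cons x z')
  obtain p q where y: "y = p @ x # q" and comm: "\<forall>a\<in>set p. Bmat m a x = 0"
    and pq: "\<rho> (p @ q) = \<rho> z'"
    using act_eq_Cons_split Cons.prems by metis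
  have IH: "set (p @ q) = set z' \<and> (\<forall>a b. Bmat m a b \<noteq> 0 \<longrightarrow> before (p @ q) a b \<longrightarrow> before z' a b)"
    using Cons.IH[OF _ _ _ _ pq] Cons.prems y by auto
  show ?case
  proof
    show "set y = set (x # z')" using IH y by auto
  next
    show "\<forall>a b. Bmat m a b \<noteq> 0 \<longrightarrow> before y a b \<longrightarrow> before (x # z') a b"
    proof (intro allI impI)
      fix a b assume "Bmat m a b \<noteq> 0" and "before y a b"
      then have "(a = x \<and> b \<in> set (p @ q)) \<or> before (p @ q) a b"
        using before_move_front[of p x q a b] comm Cons.prems(3) y by auto
      then show "before (x # z') a b" using IH \<open>Bmat m a b \<noteq> 0\<close> before_Cons_iff by auto
    qed
  qed
qed

lemma omega_simple_eq:
  assumes y: "coxeter_word n y" and y': "coxeter_word n y'" and eq: "\<rho> y = \<rho> y'"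
    and ab: "a < n" "b < n"
  shows "omega_simple m y a b = omega_simple m y' a b"
proof (cases "Bmat m a b = 0")
  case True then show ?thesis by (simp add: omega_simple_def)
next
  case False
  have ys: "distinct y" "set y \<subseteq> {..<n}" "distinct y'" "set y' \<subseteq> {..<n}"
    using y y' by (auto simp: coxeter_word_def)
  have o1: "\<forall>a b. Bmat m a b \<noteq> 0 \<longrightarrow> before y a b \<longrightarrow> before y' a b"
    using coxeter_word_orientation[OF ys(3,4,1,2) eq] by blast
  have o2: "\<forall>a b. Bmat m a b \<noteq> 0 \<longrightarrow> before y' a b \<longrightarrow> before y a b"
    using coxeter_word_orientation[OF ys(1,2,3,4) eq[symmetric]] by blast
  have F2: "Bmat m b a \<noteq> 0" using False Bmat_sym ab by simp
  have "before y a b = before y' a b" "before y b a = before y' b a"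
    using o1 o2 False F2 by blast+
  then show ?thesis by (simp add: omega_simple_def)
qed

lemma omega_eq_of_act_eq:
  assumes "coxeter_word n y" "coxeter_word n y'" "\<rho> y = \<rho> y'"
  shows "omega n m y = omega n m y'"
  unfolding omega_def using omega_simple_eq[OF assms] by (intro ext sum.cong refl) auto

section \<open>Conjugating \<open>c\<close> by an initial generator\<close>

lemma omega_simple_initial:
  assumes cw: "coxeter_word n (x # z)" and ab: "a < n" "b < n"
  shows "omega_simple m (x # z) x b = (if b = x then 0 else Bmat m x b)"
    and "omega_simple m (x # z) a x = (if a = x then 0 else - Bmat m a x)"
proof -
  have d: "distinct (x # z)" and st: "set (x # z) = {..<n}" using cw by (auto simp: coxeter_word_def)
  have nb: "\<not> before (x # z) c x" for c
    using before_Cons_iff[of x z c x] before_distinct[of z c x] d by auto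
  show "omega_simple m (x # z) x b = (if b = x then 0 else Bmat m x b)"
  proof (cases "b = x")
    case True then show ?thesis using nb by (simp add: omega_simple_def)
  next
    case False
    then have "b \<in> set z" using st ab by auto
    then show ?thesis using False before_Cons_iff by (simp add: omega_simple_def)
  qed
  show "omega_simple m (x # z) a x = (if a = x then 0 else - Bmat m a x)"
  proof (cases "a = x")
    case True then show ?thesis using nb by (simp add: omega_simple_def)
  next
    case False
    then have "a \<in> set z" using st ab by auto
    then show ?thesis using False before_Cons_iff nb by (simp add: omega_simple_def)
  qed
qed

lemma omega_simple_rotate:
  assumes cw: "coxeter_word n (x # z)" and ab: "a < n" "b < n"
  shows "omega_simple m (z @ [x]) a b = omega_simple m (x # z) a b
     + (if a = x then (if b = x then 0 else -2 * Bmat m x b) else 0)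
     + (if b = x then (if a = x then 0 else 2 * Bmat m a x) else 0)"
proof -
  have d: "distinct (x # z)" and st: "set (x # z) = {..<n}" using cw by (auto simp: coxeter_word_def)
  have xz: "x \<notin> set z" using d by simp
  have bz: "before z c c' \<Longrightarrow> c \<in> set z \<and> c' \<in> set z \<and> c \<noteq> c'" for c c'
    using before_distinct[of z c c'] d by auto
  have B1: "before (x # z) c c' \<longleftrightarrow> (c = x \<and> c' \<in> set z) \<or> before z c c'" for c c'
    by (rule before_Cons_iff)
  have B2: "before (z @ [x]) c c' \<longleftrightarrow> (c' = x \<and> c \<in> set z) \<or> before z c c'" for c c'
    by (rule before_snoc_iff)
  show ?thesis
  proof (cases "a = x")
    case True
    show ?thesis
    proof (cases "b = x")
      case True
      then show ?thesis using \<open>a = x\<close> B1 B2 bz xz by (auto simp: omega_simple_def)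
    next
      case False
      then have "b \<in> set z" using st ab by auto
      then show ?thesis using \<open>a = x\<close> False B1 B2 bz xz by (auto simp: omega_simple_def)
    qed
  next
    case False
    then have az: "a \<in> set z" using st ab by auto
    show ?thesis
    proof (cases "b = x")
      case True
      then show ?thesis using False az B1 B2 bz xz by (auto simp: omega_simple_def)
    next
      case bF: False
      have "before (x # z) a b = before (z @ [x]) a b" "before (x # z) b a = before (z @ [x]) b a"
        using B1 B2 False bF by auto
      then show ?thesis using False bF by (simp add: omega_simple_def)
    qed
  qed
qed

lemma omega_initial_simple_root:
  assumes cw: "coxeter_word n (x # z)"
  shows "omega n m (x # z) (\<alpha> x) v = B (\<alpha> x) v - 2 * v x"
proof -
  have xn: "x < n" using cw by (auto simp: coxeter_word_def)
  have "omega n m (x # z) (\<alpha> x) v = (\<Sum>b<n. v b * (if b = x then 0 else Bmat m x b))"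
    using xn omega_simple_initial(1)[OF cw] by (simp add: bilin_simple_root_left omega_eq_bilin)
  then show ?thesis using sum_lessThan_except[OF xn] xn by (simp add: Bform_simple_root_left)
qed

lemma omega_simple_root_initial:
  assumes cw: "coxeter_word n (x # z)"
  shows "omega n m (x # z) u (\<alpha> x) = 2 * u x - B u (\<alpha> x)"
proof -
  have xn: "x < n" using cw by (auto simp: coxeter_word_def)
  have "omega n m (x # z) u (\<alpha> x) = (\<Sum>a<n. u a * (if a = x then 0 else - Bmat m a x))"
    using xn omega_simple_initial(2)[OF cw] by (simp add: bilin_simple_root_right omega_eq_bilin)
  also have "\<dots> = (\<Sum>a<n. u a * (- Bmat m a x)) - u x * (- Bmat m x x)"
    by (rule sum_lessThan_except[OF xn])
  finally show ?thesis using xn by (simp add: Bform_simple_root_right sum_negf)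
qed

lemma omega_sref_expand:
  assumes cw: "coxeter_word n (x # z)"
  shows "omega n m (x # z) (\<sigma> x u) (\<sigma> x v)
    = omega n m (x # z) u v - 2 * B v (\<alpha> x) * u x + 2 * B u (\<alpha> x) * v x"
proof -
  let ?\<omega> = "omega n m (x # z)"
  have xn: "x < n" using cw by (auto simp: coxeter_word_def)
  have "?\<omega> (\<sigma> x u) (\<sigma> x v) = 1 * ?\<omega> u (\<sigma> x v) + (- B u (\<alpha> x)) * ?\<omega> (\<alpha> x) (\<sigma> x v)"
    unfolding omega_eq_bilin by (subst sref_eq_combination[of x u], rule bilin_linear_left)
  also have "?\<omega> u (\<sigma> x v) = 1 * ?\<omega> u v + (- B v (\<alpha> x)) * ?\<omega> u (\<alpha> x)"
    unfolding omega_eq_bilin by (subst sref_eq_combination[of x v], rule bilin_linear_right)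
  also have "?\<omega> (\<alpha> x) (\<sigma> x v) = 1 * ?\<omega> (\<alpha> x) v + (- B v (\<alpha> x)) * ?\<omega> (\<alpha> x) (\<alpha> x)"
    unfolding omega_eq_bilin by (subst sref_eq_combination[of x v], rule bilin_linear_right)
  finally show ?thesis
    using xn Bform_sym[of v "\<alpha> x"]
    by (simp add: omega_initial_simple_root[OF cw] omega_simple_root_initial[OF cw]
        Bform_simple_roots algebra_simps)
qed

text \<open>Moving \<open>x\<close> from the front of \<open>c\<close> to the back only changes \<open>\<omega>\<close> on pairs involving \<open>\<alpha>\<^sub>x\<close>,
  where the sign flips.\<close>

lemma omega_rotate:
  assumes cw: "coxeter_word n (x # z)"
  shows "omega n m (z @ [x]) u v
    = omega n m (x # z) u v - 2 * B v (\<alpha> x) * u x + 2 * B u (\<alpha> x) * v x"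
proof -
  have xn: "x < n" using cw by (auto simp: coxeter_word_def)
  have "omega n m (z @ [x]) u v = bilin n (\<lambda>a b. omega_simple m (x # z) a b
     + (if a = x then (if b = x then 0 else -2 * Bmat m x b) else 0)
     + (if b = x then (if a = x then 0 else 2 * Bmat m a x) else 0)) u v"
    unfolding omega_eq_bilin by (rule bilin_cong) (rule omega_simple_rotate[OF cw])
  also have "\<dots> = omega n m (x # z) u v + u x * (\<Sum>b<n. v b * (if b = x then 0 else -2 * Bmat m x b))
      + v x * (\<Sum>a<n. u a * (if a = x then 0 else 2 * Bmat m a x))"
    unfolding bilin_add_form bilin_row[OF xn] bilin_col[OF xn] omega_eq_bilin ..
  also have "(\<Sum>b<n. v b * (if b = x then 0 else -2 * Bmat m x b)) = -2 * (B v (\<alpha> x) - v x * 2)"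
    using xn Bform_sym[of v "\<alpha> x"] unfolding sum_lessThan_except[OF xn]
    by (simp add: Bform_simple_root_left sum_distrib_left algebra_simps)
  also have "(\<Sum>a<n. u a * (if a = x then 0 else 2 * Bmat m a x)) = 2 * (B u (\<alpha> x) - u x * 2)"
    using xn unfolding sum_lessThan_except[OF xn]
    by (simp add: Bform_simple_root_right sum_distrib_left algebra_simps)
  finally show ?thesis by (simp add: algebra_simps)
qed

lemma omega_sref:
  "coxeter_word n (x # z) \<Longrightarrow> omega n m (x # z) (\<sigma> x u) (\<sigma> x v) = omega n m (z @ [x]) u v"
  by (simp add: omega_sref_expand omega_rotate)

section \<open>Admissible sequences\<close>

lemma admissible_set: "admissible n m c xs \<Longrightarrow> set xs \<subseteq> {..<n}"
proof (induction xs arbitrary: c)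
  case (Cons x xs)
  then obtain y where "coxeter_word n y" "y \<noteq> []" "hd y = x"
    by (auto simp: is_initial_def)
  then have "x < n" by (metis coxeter_word_def hd_in_set lessThan_iff)
  then show ?case using Cons by auto
qed simp

lemma admissible_coxeq: "ceq c c' \<Longrightarrow> admissible n m c xs \<Longrightarrow> admissible n m c' xs"
proof (induction xs arbitrary: c c')
  case (Cons x xs)
  have "is_initial n m c x" "admissible n m ([x] @ c @ [x]) xs" using Cons.prems by auto
  then obtain y where y: "coxeter_word n y" "y \<noteq> []" "hd y = x" "ceq y c"
    by (auto simp: is_initial_def)
  have "is_initial n m c' x" unfolding is_initial_def
    using y coxeq.trans[OF y(4) Cons.prems(1)] by blast
  moreover have "ceq ([x] @ c @ [x]) ([x] @ c' @ [x])" by (rule coxeq_context[OF Cons.prems(1)])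
  ultimately show ?case using Cons.IH \<open>admissible n m ([x] @ c @ [x]) xs\<close> by simp
qed simp

lemma reduced_word_Cons: "reduced_word n m (x # xs) \<Longrightarrow> reduced_word n m xs"
  using word_length_reduced word_length_append_eq_length[of "[x]" xs] reduced_wordI by simp

lemma admissible_Cons_rotate:
  assumes y: "coxeter_word n y" and adm: "admissible n m y (x # xs)"
  obtains z where "coxeter_word n (x # z)" "omega n m y = omega n m (x # z)"
    "admissible n m (z @ [x]) xs"
proof -
  obtain y0 where y0: "coxeter_word n y0" "y0 \<noteq> []" "hd y0 = x" "ceq y0 y"
    using adm by (auto simp: is_initial_def)
  then obtain z where z: "y0 = x # z" by (cases y0) auto
  have xn: "x < n" using y0 z by (auto simp: coxeter_word_def)
  have "omega n m y = omega n m (x # z)"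
    by (rule omega_eq_of_act_eq[OF y]) (use y0 z act_coxeq[OF y0(4)] in simp_all)
  moreover have "ceq ([x] @ y @ [x]) ([] @ [x, x] @ z @ [x])"
    using coxeq_context[OF coxeq.sym[OF y0(4)], of "[x]" "[x]"] z by simp
  then have "ceq ([x] @ y @ [x]) (z @ [x])" using coxeq_cancel[OF xn] coxeq.trans by fastforce
  then have "admissible n m (z @ [x]) xs" using adm admissible_coxeq by simp
  moreover have "coxeter_word n (x # z)" using y0 z by simp
  ultimately show thesis using that by blast
qed

text \<open>The case \<open>i = 1\<close>: \<open>\<omega>\<^sub>c(\<alpha>\<^sub>x, \<beta>) = B(\<alpha>\<^sub>x, \<beta>) - 2 \<beta>\<^sub>x\<close> because \<open>x\<close> comes first in \<open>c\<close>.\<close>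

lemma omega_initial_pos_root:
  assumes c: "coxeter_word n (x # z)" and pos: "pos_vec \<beta>" "pos_vec (\<sigma> x \<beta>)"
  shows "omega n m (x # z) (\<alpha> x) \<beta> \<le> 0
    \<and> (omega n m (x # z) (\<alpha> x) \<beta> = 0 \<longrightarrow> B (\<alpha> x) \<beta> = 0)"
proof
  have xn: "x < n" using c by (auto simp: coxeter_word_def)
  have w: "omega n m (x # z) (\<alpha> x) \<beta> = (\<Sum>b<n. \<beta> b * (if b = x then 0 else Bmat m x b))"
    using omega_simple_initial(1)[OF c] xn by (simp add: omega_eq_bilin bilin_simple_root_left)
  show "omega n m (x # z) (\<alpha> x) \<beta> \<le> 0"
    unfolding w using pos(1) Bmat_nonpos[OF xn]
    by (intro sum_nonpos) (auto simp: pos_vec_def mult_nonneg_nonpos)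
  have Bx: "B (\<alpha> x) \<beta> = omega n m (x # z) (\<alpha> x) \<beta> + 2 * \<beta> x"
    by (simp add: omega_initial_simple_root[OF c])
  show "omega n m (x # z) (\<alpha> x) \<beta> = 0 \<longrightarrow> B (\<alpha> x) \<beta> = 0"
  proof
    assume h: "omega n m (x # z) (\<alpha> x) \<beta> = 0"
    then have "\<sigma> x \<beta> x = - \<beta> x" using Bx Bform_sym[of \<beta> "\<alpha> x"] by (simp add: sref_def)
    then have "\<beta> x = 0" using pos xn by (force simp: pos_vec_def)
    then show "B (\<alpha> x) \<beta> = 0" using Bx h by simp
  qed
qed

lemma omega_prefix_roots:
  "coxeter_word n y \<Longrightarrow> admissible n m y xs \<Longrightarrow> reduced_word n m xs \<Longrightarrow> i < j \<Longrightarrow> j < length xs \<Longrightarrow>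
   omega n m y (prefix_root xs i) (prefix_root xs j) \<le> 0 \<and>
   (omega n m y (prefix_root xs i) (prefix_root xs j) = 0 \<longrightarrow> B (prefix_root xs i) (prefix_root xs j) = 0)"
proof (induction xs arbitrary: y i j)
  case Nil then show ?case by simp
next
  case (Cons x xs)
  obtain z where c: "coxeter_word n (x # z)" and om: "omega n m y = omega n m (x # z)"
    and adm: "admissible n m (z @ [x]) xs"
    using admissible_Cons_rotate[OF Cons.prems(1,2)] by blast
  have xs_set: "set (x # xs) \<subseteq> {..<n}" by (rule admissible_set[OF Cons.prems(2)])
  have red: "reduced_word n m xs" by (rule reduced_word_Cons[OF Cons.prems(3)])
  obtain j' where j: "j = Suc j'" "j' < length xs" using Cons.prems(4,5) by (cases j) auto
  show ?case
  proof (cases i)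
    case 0
    have "pos_vec (\<sigma> x (prefix_root xs j'))"
      using reduced_prefix_root_pos[OF Cons.prems(3) xs_set Cons.prems(5)] j by (simp add: prefix_root_Cons_Suc)
    moreover have "pos_vec (\<sigma> x (\<sigma> x (prefix_root xs j')))"
      using reduced_prefix_root_pos[OF red _ j(2)] xs_set by simp
    ultimately show ?thesis
      unfolding 0 j om prefix_root_Cons_0 prefix_root_Cons_Suc by (rule omega_initial_pos_root[OF c])
  next
    case (Suc i')
    have "coxeter_word n (z @ [x])" using c by (auto simp: coxeter_word_def)
    then have "omega n m (z @ [x]) (prefix_root xs i') (prefix_root xs j') \<le> 0 \<and>
        (omega n m (z @ [x]) (prefix_root xs i') (prefix_root xs j') = 0 \<longrightarrow>
          B (prefix_root xs i') (prefix_root xs j') = 0)"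
      using Cons.IH adm red Cons.prems(4) Suc j by simp
    moreover have "x < n" using xs_set by simp
    ultimately show ?thesis
      unfolding Suc j om prefix_root_Cons_Suc omega_sref[OF c] by (simp add: Bform_sref)
  qed
qed

end

theorem lemma8:
  fixes n :: nat and m :: "nat \<Rightarrow> nat \<Rightarrow> enat" and y xs :: "nat list"
  assumes "coxeter_matrix n m"
    and "coxeter_word n y"
    and "admissible n m y xs"
    and "reduced_word n m xs"
    and "i < j" and "j < length xs"
  shows "omega n m y (root_of n m (refl_word xs i)) (root_of n m (refl_word xs j)) \<le> 0
    \<and> (omega n m y (root_of n m (refl_word xs i)) (root_of n m (refl_word xs j)) = 0
         \<longrightarrow> coxeq n m (refl_word xs i @ refl_word xs j) (refl_word xs j @ refl_word xs i))"
proof -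
  interpret coxeter_system n m by (rule coxeter_system.intro) fact
  have xs: "set xs \<subseteq> {..<n}" by (rule admissible_set[OF assms(3)])
  have i: "i < length xs" using assms(5,6) by simp
  show ?thesis
    unfolding root_of_refl_word[OF assms(4) xs i] root_of_refl_word[OF assms(4) xs assms(6)]
    using omega_prefix_roots[OF assms(2-6)] refl_words_commute[OF xs i assms(6)] by blast
qed

end
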